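(* Let $T>0$, $x\in\mathbb{R}$, let $(X^x_t)_{0\le t\le T}$ solve $X^x_t=x+\int_0^t\alpha(X^x_s)\,ds+W_t$ with $W$ a standard Brownian motion, and assume the setting described in the context (in particular the representation of $\mathbb{E}\Psi(X^x_T)$ given there). Let $K>0$ and let $X^{x,K}_T$ denote the output of the truncated rejection procedure at level $K$ described in the context. Let $\Psi$ be a measurable function with $\mathbb{E}[\Psi^2(\tilde B^x_T)]<\infty$. Then: (a) $$\left|\mathbb{E}\Psi(X^x_T)-\mathbb{E}\Psi(X^{x,K}_T)\right|\le \sqrt{\mathbb{E}\left[\Psi^2(\tilde B^x_T)\right]}\left(\frac{\mathbb{P}\left(\sup_{0\le\theta\le T}\varphi(\tilde B^x_\theta)>K\right)}{p_K\sqrt{p_\infty}}+\frac{\sqrt{\mathbb{P}\left(\sup_{0\le\theta\le T}\varphi(\tilde B^x_\theta)>K\right)}}{p_K}\right),$$ where $$p_K=\mathbb{E}\left[\exp\left(-\int_0^T K\wedge\varphi(\tilde B^x_\theta)\,d\theta\right)\right],\qquad p_\infty=\mathbb{E}\left[\exp\left(-\int_0^T\varphi(\tilde B^x_\theta)\,d\theta\right)\right].$$ (b) If moreover $\Psi$ is bounded, then $$\left|\mathbb{E}\Psi(X^x_T)-\mathbb{E}\Psi(X^{x,K}_T)\right|\le \frac{2\|\Psi\|_\infty}{p_K}\,\mathbb{P}\left(\sup_{0\le\theta\le T}\varphi(\tilde B^x_\theta)>K\right).$$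
   Context: $\alpha:\mathbb{R}\to\mathbb{R}$ is $C^1$, $A(y)=\int_0^y\alpha(z)\,dz$, and $\varphi(y)=\frac{\alpha^2(y)+\alpha'(y)}{2}$ is assumed nonnegative (it may be unbounded). The function $\theta\mapsto\exp\left(-\frac{(\theta-x)^2}{2T}+A(\theta)\right)$ is integrable and $(\tilde B^x_t)_{0\le t\le T}$ is a Brownian bridge from $\tilde B^x_0=x$ whose terminal value has law $\mathbb{P}(\tilde B^x_T\in d\theta)=C\exp\left(-\frac{(\theta-x)^2}{2T}+A(\theta)\right)d\theta$ ($C$ a normalising constant). Standing assumption (exact-simulation representation): for every measurable $\Psi$ with the relevant expectations finite, $$\mathbb{E}\Psi(X^x_T)=\frac{\mathbb{E}\left[\Psi(\tilde B^x_T)\exp\left(-\int_0^T\varphi(\tilde B^x_\theta)d\theta\right)\right]}{\mathbb{E}\left[\exp\left(-\int_0^T\varphi(\tilde B^x_\theta)d\theta\right)\right]}.$$ Truncated procedure at level $K$: let $N^K$ be a unit-intensity Poisson point process on $[0,T]\times[0,K]$ independent of $\tilde B^x$, and let $D=\{(t,y)\in[0,T]\times\mathbb{R}_+: y\le\varphi(\tilde B^x_t)\}$. A path of $\tilde B^x$ is accepted iff no point of $N^K$ lies in $D$, and $X^{x,K}_T$ is $\tilde B^x_T$ conditioned on acceptance, i.e. $\mathbb{E}\Psi(X^{x,K}_T)=\mathbb{E}[\Psi(\tilde B^x_T)\mathbf{1}_{N^K\cap D=\emptyset}]/\mathbb{P}(N^K\cap D=\emptyset)$. Thus $p_K$ is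 the acceptance probability of this truncated procedure and $p_\infty$ that of the untruncated one. *)

theory Defs
  imports "HOL-Probability.Probability"
begin

definition brownian_motion :: "'a measure \<Rightarrow> real \<Rightarrow> (real \<Rightarrow> 'a \<Rightarrow> real) \<Rightarrow> bool" where
  "brownian_motion M T W \<longleftrightarrow>
     prob_space M \<and>
     (\<forall>t\<in>{0..T}. W t \<in> borel_measurable M) \<and>
     (\<forall>\<omega>\<in>space M. W 0 \<omega> = 0 \<and> continuous_on {0..T} (\<lambda>t. W t \<omega>)) \<and>
     (\<forall>s t. 0 \<le> s \<and> s < t \<and> t \<le> T \<longrightarrow>
        distributed M lborel (\<lambda>\<omega>. W t \<omega> - W s \<omega>) (\<lambda>z. ennreal (normal_density 0 (sqrt (t - s)) z))) \<and>
     (\<forall>ts. sorted_wrt (<) ts \<and> set ts \<subseteq> {0..T} \<longrightarrow>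
        prob_space.indep_vars M (\<lambda>_. borel) (\<lambda>i \<omega>. W (ts ! Suc i) \<omega> - W (ts ! i) \<omega>) {..<length ts - 1})"

definition poisson_point_process :: "'a measure \<Rightarrow> (real \<times> real) set \<Rightarrow> ('a \<Rightarrow> (real \<times> real) set) \<Rightarrow> bool" where
  "poisson_point_process M R N \<longleftrightarrow>
     (\<forall>\<omega>\<in>space M. finite (N \<omega>) \<and> N \<omega> \<subseteq> R) \<and>
     (\<forall>S. S \<in> sets lborel \<and> S \<subseteq> R \<longrightarrow>
        (\<lambda>\<omega>. card (N \<omega> \<inter> S)) \<in> measurable M (count_space UNIV) \<and>
        (\<forall>n. measure M {\<omega>\<in>space M. card (N \<omega> \<inter> S) = n}
               = measure lborel S ^ n / fact n * exp (- measure lborel S))) \<and>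
     (\<forall>Ss. (\<forall>S\<in>set Ss. S \<in> sets lborel \<and> S \<subseteq> R) \<and> disjoint_family_on (\<lambda>i. Ss ! i) {..<length Ss} \<longrightarrow>
        prob_space.indep_vars M (\<lambda>_. count_space UNIV) (\<lambda>i \<omega>. card (N \<omega> \<inter> Ss ! i)) {..<length Ss})"

definition rv_events :: "'a measure \<Rightarrow> 'b measure \<Rightarrow> ('a \<Rightarrow> 'b) \<Rightarrow> 'a set set" where
  "rv_events M Mx X = {X -` E \<inter> space M | E. E \<in> sets Mx}"

definition A_fun :: "(real \<Rightarrow> real) \<Rightarrow> real \<Rightarrow> real" where
  "A_fun \<alpha> y = (LBINT z=0..y. \<alpha> z)"

definition phi_fun :: "(real \<Rightarrow> real) \<Rightarrow> (real \<Rightarrow> real) \<Rightarrow> real \<Rightarrow> real" where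
  "phi_fun \<alpha> \<alpha>' y = ((\<alpha> y)\<^sup>2 + \<alpha>' y) / 2"

text \<open>Unnormalised density of the terminal value of the bridge.\<close>
definition end_dens :: "(real \<Rightarrow> real) \<Rightarrow> real \<Rightarrow> real \<Rightarrow> real \<Rightarrow> real" where
  "end_dens \<alpha> x T \<theta> = exp (- (\<theta> - x)\<^sup>2 / (2 * T) + A_fun \<alpha> \<theta>)"

text \<open>Brownian bridge from x (at time 0) to Theta (at time T), built from a Brownian motion W
  independent of Theta.\<close>
definition bridge :: "real \<Rightarrow> real \<Rightarrow> (real \<Rightarrow> 'a \<Rightarrow> real) \<Rightarrow> ('a \<Rightarrow> real) \<Rightarrow> real \<Rightarrow> 'a \<Rightarrow> real" where
  "bridge x T W \<Theta> t \<omega> = x + t / T * (\<Theta> \<omega> - x) + W t \<omega> - t / T * W T \<omega>"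

definition accept_event :: "'a measure \<Rightarrow> (real \<Rightarrow> real) \<Rightarrow> (real \<Rightarrow> 'a \<Rightarrow> real) \<Rightarrow> real
     \<Rightarrow> ('a \<Rightarrow> (real \<times> real) set) \<Rightarrow> 'a set" where
  "accept_event M \<phi> B T N =
     {\<omega>\<in>space M. N \<omega> \<inter> {(t, y). 0 \<le> t \<and> t \<le> T \<and> 0 \<le> y \<and> y \<le> \<phi> (B t \<omega>)} = {}}"

text \<open>E Psi(X^{x,K}_T): Psi(B_T) conditioned on acceptance.\<close>
definition truncated_expectation :: "'a measure \<Rightarrow> (real \<Rightarrow> real) \<Rightarrow> (real \<Rightarrow> 'a \<Rightarrow> real) \<Rightarrow> real
     \<Rightarrow> ('a \<Rightarrow> (real \<times> real) set) \<Rightarrow> (real \<Rightarrow> real) \<Rightarrow> real" where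
  "truncated_expectation M \<phi> B T N \<Psi> =
     (\<integral>\<omega>. \<Psi> (B T \<omega>) * indicator (accept_event M \<phi> B T N) \<omega> \<partial>M) / measure M (accept_event M \<phi> B T N)"

end

theory Submission
  imports Defs
begin

text \<open>Write \<open>w = exp (- \<integral>\<^sub>0\<^sup>T \<phi>(B\<^sub>\<theta>) d\<theta>)\<close> and \<open>w\<^sub>K = exp (- \<integral>\<^sub>0\<^sup>T K \<sqinter> \<phi>(B\<^sub>\<theta>) d\<theta>)\<close>.
  A path is accepted iff the Poisson points in \<open>[0,T] \<times> [0,K]\<close> avoid the hypograph of
  \<open>K \<sqinter> \<phi>(B)\<close>, whose area is \<open>\<integral>\<^sub>0\<^sup>T K \<sqinter> \<phi>(B\<^sub>\<theta>) d\<theta>\<close>; as the point process is independent of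
  the bridge, a path is accepted with conditional probability \<open>w\<^sub>K\<close>, so that
  \<open>E \<Psi>(X\<^sup>K) = E[\<Psi>(B\<^sub>T) w\<^sub>K] / E w\<^sub>K\<close>, while the representation gives
  \<open>E \<Psi>(X) = E[\<Psi>(B\<^sub>T) w] / E w\<close>. Now \<open>0 < w \<le> w\<^sub>K \<le> 1\<close> and the two weights agree outside
  the event \<open>{sup \<phi>(B) > K}\<close>, so Cauchy-Schwarz (or the bound on \<open>\<Psi>\<close>) controls the
  difference of the two weighted means.

  To condition on the random hypograph, it is approximated from above by dyadic staircases,
  which take only finitely many values and are measurable functions of the path.\<close>

lemma Rats_near_in_interval:
  fixes a b t d :: real
  assumes "a < b" "t \<in> {a..b}" "0 < d"
  obtains q where "q \<in> \<rat>" "q \<in> {a..b}" "\<bar>q - t\<bar> < d"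
proof (cases "t < b")
  case True
  obtain q where "q \<in> \<rat>" "t < q" "q < min b (t + d)"
    using Rats_dense_in_real[of t "min b (t + d)"] True assms by auto
  then show ?thesis using assms that by auto
next
  case False
  obtain q where "q \<in> \<rat>" "max a (t - d) < q" "q < t"
    using Rats_dense_in_real[of "max a (t - d)" t] False assms by auto
  then show ?thesis using assms that by auto
qed

lemma finite_disjoint_from_decseq:
  assumes "decseq R" "finite A" "A \<inter> (\<Inter>m. R m) = {}"
  shows "\<exists>m. A \<inter> R m = {}"
  using assms(2,3)
proof (induction A rule: finite_induct)
  case (insert p A)
  then obtain m\<^sub>1 m\<^sub>2 where "A \<inter> R m\<^sub>1 = {}" "p \<notin> R m\<^sub>2"
    by auto
  then have "insert p A \<inter> R (max m\<^sub>1 m\<^sub>2) = {}"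
    using decseqD[OF assms(1), of m\<^sub>1 "max m\<^sub>1 m\<^sub>2"] decseqD[OF assms(1), of m\<^sub>2 "max m\<^sub>1 m\<^sub>2"]
    by auto
  then show ?case ..
qed simp

lemma eventually_const_div_pow2_less:
  "0 < c \<Longrightarrow> eventually (\<lambda>m. C / 2 ^ m < (c :: real)) sequentially"
  using order_tendstoD(2)[OF tendsto_mult_right_zero[OF LIMSEQ_realpow_zero[of "1/2"]], of c C]
  by (simp add: power_divide)

lemma integral_abs_mult_le_sqrt:
  fixes u v :: "'a \<Rightarrow> real"
  assumes [measurable]: "u \<in> borel_measurable M" "v \<in> borel_measurable M"
    and u2: "integrable M (\<lambda>x. (u x)\<^sup>2)" and v2: "integrable M (\<lambda>x. (v x)\<^sup>2)"
  shows "(\<integral>x. \<bar>u x * v x\<bar> \<partial>M) \<le> sqrt (\<integral>x. (u x)\<^sup>2 \<partial>M) * sqrt (\<integral>x. (v x)\<^sup>2 \<partial>M)"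
proof (cases "integrable M (\<lambda>x. \<bar>u x * v x\<bar>)")
  case True
  have nn_sq: "(\<integral>\<^sup>+x. ennreal \<bar>w x\<bar> ^ 2 \<partial>M) = ennreal (\<integral>x. (w x)\<^sup>2 \<partial>M)"
    if "integrable M (\<lambda>x. (w x)\<^sup>2)" for w :: "'a \<Rightarrow> real"
  proof -
    have "(\<integral>\<^sup>+x. ennreal \<bar>w x\<bar> ^ 2 \<partial>M) = (\<integral>\<^sup>+x. ennreal ((w x)\<^sup>2) \<partial>M)"
      by (simp add: ennreal_power)
    also have "\<dots> = ennreal (\<integral>x. (w x)\<^sup>2 \<partial>M)"
      using that by (intro nn_integral_eq_integral) auto
    finally show ?thesis .
  qed
  have "ennreal (\<integral>x. \<bar>u x * v x\<bar> \<partial>M) = (\<integral>\<^sup>+x. ennreal \<bar>u x\<bar> * ennreal \<bar>v x\<bar> \<partial>M)"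
  proof -
    have "ennreal (\<integral>x. \<bar>u x * v x\<bar> \<partial>M) = (\<integral>\<^sup>+x. ennreal \<bar>u x * v x\<bar> \<partial>M)"
      using True by (intro nn_integral_eq_integral[symmetric]) auto
    then show ?thesis by (simp add: abs_mult ennreal_mult)
  qed
  then have "ennreal ((\<integral>x. \<bar>u x * v x\<bar> \<partial>M)\<^sup>2) = (\<integral>\<^sup>+x. ennreal \<bar>u x\<bar> * ennreal \<bar>v x\<bar> \<partial>M)\<^sup>2"
    by (simp add: ennreal_power[symmetric])
  also have "\<dots> \<le> (\<integral>\<^sup>+x. ennreal \<bar>u x\<bar> ^ 2 \<partial>M) * (\<integral>\<^sup>+x. ennreal \<bar>v x\<bar> ^ 2 \<partial>M)"
    by (rule Cauchy_Schwarz_nn_integral) measurable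
  also have "\<dots> = ennreal ((\<integral>x. (u x)\<^sup>2 \<partial>M) * (\<integral>x. (v x)\<^sup>2 \<partial>M))"
    using u2 v2 by (simp add: nn_sq ennreal_mult)
  finally have "(\<integral>x. \<bar>u x * v x\<bar> \<partial>M)\<^sup>2 \<le> (\<integral>x. (u x)\<^sup>2 \<partial>M) * (\<integral>x. (v x)\<^sup>2 \<partial>M)"
    by (rule ennreal_le_iff[THEN iffD1, rotated]) simp
  then show ?thesis
    by (metis real_le_rsqrt real_sqrt_mult)
qed (simp add: not_integrable_integral_eq)

lemma ratio_difference_le:
  fixes a b p q E\<^sub>1 E\<^sub>2 :: real
  assumes "0 < p" "p \<le> p'" "p' - p \<le> q"
    and "\<bar>a - b\<bar> \<le> E\<^sub>1" and "\<bar>a\<bar> \<le> E\<^sub>2"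
  shows "\<bar>a / p - b / p'\<bar> \<le> E\<^sub>1 / p' + E\<^sub>2 * q / (p * p')"
proof -
  have "a / p - b / p' = (a - b) / p' + a * (p' - p) / (p * p')"
    using assms(1,2) by (simp add: field_simps)
  moreover have "\<bar>(a - b) / p'\<bar> \<le> E\<^sub>1 / p'"
    using assms by (simp add: abs_div divide_right_mono)
  moreover have "\<bar>a * (p' - p)\<bar> \<le> E\<^sub>2 * q"
    using assms by (auto simp: abs_mult intro: mult_mono)
  then have "\<bar>a * (p' - p) / (p * p')\<bar> \<le> E\<^sub>2 * q / (p * p')"
    using assms by (simp add: abs_div divide_right_mono)
  ultimately show ?thesis by linarith
qed

context prob_space
begin

context
  fixes \<psi> w w' :: "'a \<Rightarrow> real" and Q :: "'a set"
  assumes \<psi>_measurable [measurable]: "\<psi> \<in> borel_measurable M"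
    and \<psi>_square: "integrable M (\<lambda>\<omega>. (\<psi> \<omega>)\<^sup>2)"
    and weights_measurable [measurable]: "w \<in> borel_measurable M" "w' \<in> borel_measurable M"
    and weights: "\<And>\<omega>. \<omega> \<in> space M \<Longrightarrow> 0 < w \<omega> \<and> w \<omega> \<le> w' \<omega> \<and> w' \<omega> \<le> 1"
    and Q_event [measurable]: "Q \<in> events"
    and weights_differ_on_Q: "\<And>\<omega>. \<omega> \<in> space M \<Longrightarrow> w' \<omega> - w \<omega> \<le> indicator Q \<omega>"
begin

lemma integrable_mult_contraction:
  assumes [measurable]: "h \<in> borel_measurable M" and "\<And>\<omega>. \<omega> \<in> space M \<Longrightarrow> \<bar>h \<omega>\<bar> \<le> 1"
  shows "integrable M (\<lambda>\<omega>. \<psi> \<omega> * h \<omega>)"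
proof (rule Bochner_Integration.integrable_bound)
  show "integrable M \<psi>"
    by (rule square_integrable_imp_integrable[OF \<psi>_measurable \<psi>_square])
  show "AE \<omega> in M. norm (\<psi> \<omega> * h \<omega>) \<le> norm (\<psi> \<omega>)"
    using assms(2) by (auto intro!: AE_I2 simp: abs_mult intro: mult_left_le)
qed measurable

lemma abs_weights_le_one: "\<omega> \<in> space M \<Longrightarrow> \<bar>w \<omega>\<bar> \<le> 1 \<and> \<bar>w' \<omega>\<bar> \<le> 1"
  using weights[of \<omega>] by auto

lemma integrable_weights: "integrable M w" "integrable M w'"
  using abs_weights_le_one by (auto intro!: integrable_const_bound[where B=1])

lemma integrable_indicator_Q: "integrable M (indicator Q :: 'a \<Rightarrow> real)"
  by (simp add: less_top[symmetric])

lemma expectation_weights: "0 < expectation w" "expectation w \<le> expectation w'"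
  using integral_less_AE_space[of "\<lambda>_. 0" w] integrable_weights weights
  by (auto simp: emeasure_space_1 intro: integral_mono)

lemma expectation_weights_diff_le: "expectation w' - expectation w \<le> prob Q"
proof -
  have "expectation w' - expectation w = (\<integral>\<omega>. w' \<omega> - w \<omega> \<partial>M)"
    using integrable_weights by simp
  also have "\<dots> \<le> (\<integral>\<omega>. indicator Q \<omega> \<partial>M)"
    using integrable_weights integrable_indicator_Q weights_differ_on_Q by (intro integral_mono) auto
  finally show ?thesis by simp
qed

lemma weighted_expectations_diff_le:
  "\<bar>expectation (\<lambda>\<omega>. \<psi> \<omega> * w \<omega>) - expectation (\<lambda>\<omega>. \<psi> \<omega> * w' \<omega>)\<bar>
     \<le> expectation (\<lambda>\<omega>. \<bar>\<psi> \<omega> * indicator Q \<omega>\<bar>)"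
proof -
  have diff: "\<bar>w \<omega> - w' \<omega>\<bar> \<le> 1" "\<bar>w \<omega> - w' \<omega>\<bar> \<le> indicator Q \<omega>" if "\<omega> \<in> space M" for \<omega>
    using weights[OF that] weights_differ_on_Q[OF that] by auto
  have "expectation (\<lambda>\<omega>. \<psi> \<omega> * w \<omega>) - expectation (\<lambda>\<omega>. \<psi> \<omega> * w' \<omega>)
      = expectation (\<lambda>\<omega>. \<psi> \<omega> * (w \<omega> - w' \<omega>))"
    using abs_weights_le_one by (subst Bochner_Integration.integral_diff[symmetric])
      (auto simp: right_diff_distrib intro!: integrable_mult_contraction)
  also have "\<bar>\<dots>\<bar> \<le> expectation (\<lambda>\<omega>. \<bar>\<psi> \<omega> * indicator Q \<omega>\<bar>)"
  proof (rule order_trans[OF integral_abs_bound integral_mono])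
    show "integrable M (\<lambda>\<omega>. \<bar>\<psi> \<omega> * (w \<omega> - w' \<omega>)\<bar>)"
      using diff by (intro integrable_abs integrable_mult_contraction) auto
    show "integrable M (\<lambda>\<omega>. \<bar>\<psi> \<omega> * indicator Q \<omega>\<bar>)"
      by (intro integrable_abs integrable_mult_contraction) auto
  qed (use diff in \<open>auto simp: abs_mult intro: mult_left_mono\<close>)
  finally show ?thesis .
qed

lemma weighted_mean_perturbation:
  "\<bar>expectation (\<lambda>\<omega>. \<psi> \<omega> * w \<omega>) / expectation w - expectation (\<lambda>\<omega>. \<psi> \<omega> * w' \<omega>) / expectation w'\<bar>
     \<le> sqrt (expectation (\<lambda>\<omega>. (\<psi> \<omega>)\<^sup>2))
         * (prob Q / (expectation w' * sqrt (expectation w)) + sqrt (prob Q) / expectation w')"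
proof -
  let ?S = "sqrt (expectation (\<lambda>\<omega>. (\<psi> \<omega>)\<^sup>2))"
  have ind_sq: "(\<lambda>\<omega>. (indicator Q \<omega> :: real)\<^sup>2) = indicator Q"
    by (auto simp: indicator_def)
  have "expectation (\<lambda>\<omega>. \<bar>\<psi> \<omega> * indicator Q \<omega>\<bar>) \<le> ?S * sqrt (prob Q)"
    using integral_abs_mult_le_sqrt[OF \<psi>_measurable _ \<psi>_square, of "indicator Q"]
      integrable_indicator_Q by (simp add: ind_sq)
  then have E\<^sub>1: "\<bar>expectation (\<lambda>\<omega>. \<psi> \<omega> * w \<omega>) - expectation (\<lambda>\<omega>. \<psi> \<omega> * w' \<omega>)\<bar> \<le> ?S * sqrt (prob Q)"
    using weighted_expectations_diff_le by linarith
  have w_sq: "integrable M (\<lambda>\<omega>. (w \<omega>)\<^sup>2)"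
    using abs_weights_le_one
    by (intro integrable_const_bound[where B=1]) (auto intro!: AE_I2 simp: abs_square_le_1)
  have "expectation (\<lambda>\<omega>. (w \<omega>)\<^sup>2) \<le> expectation w"
    using w_sq integrable_weights weights abs_weights_le_one
    by (intro integral_mono) (auto simp: power2_eq_square mult_le_cancel_right1 less_imp_le)
  then have "?S * sqrt (expectation (\<lambda>\<omega>. (w \<omega>)\<^sup>2)) \<le> ?S * sqrt (expectation w)"
    by (intro mult_left_mono real_sqrt_le_mono) auto
  then have "expectation (\<lambda>\<omega>. \<bar>\<psi> \<omega> * w \<omega>\<bar>) \<le> ?S * sqrt (expectation w)"
    using integral_abs_mult_le_sqrt[OF \<psi>_measurable _ \<psi>_square w_sq] by simp
  then have E\<^sub>2: "\<bar>expectation (\<lambda>\<omega>. \<psi> \<omega> * w \<omega>)\<bar> \<le> ?S * sqrt (expectation w)"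
    using integral_abs_bound[of M "\<lambda>\<omega>. \<psi> \<omega> * w \<omega>"] by linarith
  moreover have "?S * sqrt (prob Q) / expectation w' + ?S * sqrt (expectation w) * prob Q / (expectation w * expectation w')
      = ?S * (prob Q / (expectation w' * sqrt (expectation w)) + sqrt (prob Q) / expectation w')"
  proof -
    define r where "r = sqrt (expectation w)"
    have "0 < r" "expectation w = r * r"
      using expectation_weights(1) by (auto simp: r_def)
    then show ?thesis
      using expectation_weights by (simp add: field_simps flip: r_def)
  qed
  ultimately show ?thesis
    using ratio_difference_le[OF expectation_weights expectation_weights_diff_le E\<^sub>1 E\<^sub>2] by simp
qed

lemma weighted_mean_perturbation_bounded:
  assumes "\<And>\<omega>. \<omega> \<in> space M \<Longrightarrow> \<bar>\<psi> \<omega>\<bar> \<le> C"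
  shows "\<bar>expectation (\<lambda>\<omega>. \<psi> \<omega> * w \<omega>) / expectation w - expectation (\<lambda>\<omega>. \<psi> \<omega> * w' \<omega>) / expectation w'\<bar>
     \<le> 2 * C / expectation w' * prob Q"
proof -
  have "expectation (\<lambda>\<omega>. \<bar>\<psi> \<omega> * indicator Q \<omega>\<bar>) \<le> expectation (\<lambda>\<omega>. C * indicator Q \<omega>)"
  proof (rule integral_mono)
    show "integrable M (\<lambda>\<omega>. \<bar>\<psi> \<omega> * indicator Q \<omega>\<bar>)"
      by (intro integrable_abs integrable_mult_contraction) auto
    show "integrable M (\<lambda>\<omega>. C * indicator Q \<omega>)"
      by (rule integrable_mult_right[OF integrable_indicator_Q])
  qed (use assms in \<open>auto simp: abs_mult indicator_def\<close>)
  also have "\<dots> = C * prob Q"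
    by simp
  finally have E\<^sub>1: "\<bar>expectation (\<lambda>\<omega>. \<psi> \<omega> * w \<omega>) - expectation (\<lambda>\<omega>. \<psi> \<omega> * w' \<omega>)\<bar> \<le> C * prob Q"
    using weighted_expectations_diff_le by simp
  have "\<bar>expectation (\<lambda>\<omega>. \<psi> \<omega> * w \<omega>)\<bar> \<le> expectation (\<lambda>\<omega>. \<bar>\<psi> \<omega> * w \<omega>\<bar>)"
    by (rule integral_abs_bound)
  also have "\<dots> \<le> expectation (\<lambda>\<omega>. C * w \<omega>)"
    using assms weights integrable_weights abs_weights_le_one
    by (intro integral_mono integrable_abs integrable_mult_contraction)
      (auto simp: abs_mult less_imp_le intro: mult_right_mono)
  also have "\<dots> = C * expectation w"
    by simp
  finally have E\<^sub>2: "\<bar>expectation (\<lambda>\<omega>. \<psi> \<omega> * w \<omega>)\<bar> \<le> C * expectation w" .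
  show ?thesis
    using ratio_difference_le[OF expectation_weights expectation_weights_diff_le E\<^sub>1 E\<^sub>2]
      expectation_weights by (simp add: field_simps)
qed

end

end

section \<open>Dyadic staircases over a capped hypograph\<close>

locale capped_paths =
  fixes T K :: real and F :: "real \<Rightarrow> 'a \<Rightarrow> real" and \<Omega> :: "'a set"
  assumes T_pos: "0 < T" and K_pos: "0 < K"
    and continuous_paths: "\<And>\<omega>. \<omega> \<in> \<Omega> \<Longrightarrow> continuous_on {0..T} (\<lambda>t. F t \<omega>)"
    and nonneg: "\<And>t \<omega>. 0 \<le> F t \<omega>"
begin

definition capped :: "'a \<Rightarrow> real \<Rightarrow> real" where
  "capped \<omega> t = min K (F t \<omega>)"

definition hypograph :: "'a \<Rightarrow> (real \<times> real) set" where
  "hypograph \<omega> = {(t, y). t \<in> {0..T} \<and> 0 \<le> y \<and> y \<le> capped \<omega> t}"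

definition area :: "'a \<Rightarrow> real" where
  "area \<omega> = (LINT t:{0..T}|lborel. capped \<omega> t)"

definition dyadic_interval :: "nat \<Rightarrow> nat \<Rightarrow> real set" where
  "dyadic_interval m i = {T * real i / 2 ^ m .. T * (real i + 1) / 2 ^ m}"

text \<open>The supremum is taken over rational times only, so that it is measurable in \<open>\<omega>\<close>;
  by continuity it is the supremum over the whole interval.\<close>
definition dyadic_sup :: "nat \<Rightarrow> nat \<Rightarrow> 'a \<Rightarrow> real" where
  "dyadic_sup m i \<omega> = (SUP q \<in> \<rat> \<inter> dyadic_interval m i. capped \<omega> q)"

definition dyadic_level :: "nat \<Rightarrow> nat \<Rightarrow> 'a \<Rightarrow> nat" where
  "dyadic_level m i \<omega> = nat \<lceil>2 ^ m * dyadic_sup m i \<omega>\<rceil>"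

definition level_height :: "nat \<Rightarrow> nat \<Rightarrow> real" where
  "level_height m j = min K (real j / 2 ^ m)"

text \<open>A staircase is determined by the finite code \<open>c\<close> of its step heights; the random
  staircase \<open>staircase_of m \<omega>\<close> over the hypograph therefore takes only finitely many values.\<close>
definition staircase :: "nat \<Rightarrow> (nat \<Rightarrow> nat) \<Rightarrow> (real \<times> real) set" where
  "staircase m c = (\<Union>i<2 ^ m. dyadic_interval m i \<times> {0 .. level_height m (c i)})"

definition staircase_of :: "nat \<Rightarrow> 'a \<Rightarrow> (real \<times> real) set" where
  "staircase_of m \<omega> = staircase m (\<lambda>i. dyadic_level m i \<omega>)"

definition level_codes :: "nat \<Rightarrow> (nat \<Rightarrow> nat) set" where
  "level_codes m = PiE {..<2 ^ m} (\<lambda>_. {0 .. nat \<lceil>2 ^ m * K\<rceil>})"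

definition level_code :: "nat \<Rightarrow> 'a \<Rightarrow> nat \<Rightarrow> nat" where
  "level_code m \<omega> = restrict (\<lambda>i. dyadic_level m i \<omega>) {..<2 ^ m}"

lemma capped_bounds: "0 \<le> capped \<omega> t" "capped \<omega> t \<le> K"
  using nonneg[of t \<omega>] K_pos by (auto simp: capped_def)

lemma continuous_on_capped: "\<omega> \<in> \<Omega> \<Longrightarrow> continuous_on {0..T} (capped \<omega>)"
  unfolding capped_def[abs_def] by (intro continuous_intros continuous_paths)

lemma bdd_above_capped: "bdd_above (capped \<omega> ` S)"
  using capped_bounds by (intro bdd_aboveI2[where M=K])

lemma dyadic_interval_bounds_less: "T * real i / 2 ^ m < T * (real i + 1) / 2 ^ m"
  using T_pos by (simp add: divide_strict_right_mono)

lemma dyadic_interval_subset: "i < 2 ^ m \<Longrightarrow> dyadic_interval m i \<subseteq> {0..T}"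
proof -
  assume "i < 2 ^ m"
  then have "real i + 1 \<le> 2 ^ m"
    by (metis Suc_leI add.commute of_nat_Suc of_nat_le_iff of_nat_numeral of_nat_power)
  then have "T * (real i + 1) / 2 ^ m \<le> T"
    using T_pos by (simp add: divide_le_eq)
  then show ?thesis
    using T_pos by (auto simp: dyadic_interval_def)
qed

lemma dyadic_interval_diameter:
  "s \<in> dyadic_interval m i \<Longrightarrow> t \<in> dyadic_interval m i \<Longrightarrow> \<bar>s - t\<bar> \<le> T / 2 ^ m"
  by (auto simp: dyadic_interval_def abs_le_iff field_simps)

lemma Rats_inter_dyadic_interval_nonempty: "\<rat> \<inter> dyadic_interval m i \<noteq> {}"
proof -
  obtain q where "q \<in> \<rat>" "T * real i / 2 ^ m < q" "q < T * (real i + 1) / 2 ^ m"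
    using Rats_dense_in_real[OF dyadic_interval_bounds_less] by blast
  then show ?thesis by (auto simp: dyadic_interval_def)
qed

lemma dyadic_interval_cover:
  assumes t: "t \<in> {0..T}"
  shows "\<exists>i<2 ^ m. t \<in> dyadic_interval m i"
proof (cases "t = T")
  case True
  have "(2::nat) ^ m \<ge> 1"
    by simp
  then have "real (2 ^ m - 1 :: nat) + 1 = 2 ^ m"
    by (simp add: of_nat_diff)
  then have "t \<in> dyadic_interval m (2 ^ m - 1)"
    using True T_pos by (auto simp: dyadic_interval_def field_simps)
  then show ?thesis by (intro exI[of _ "2 ^ m - 1"]) auto
next
  case False
  define i where "i = nat \<lfloor>t * 2 ^ m / T\<rfloor>"
  have "0 \<le> t * 2 ^ m / T"
    using t T_pos by simp
  then have "real i = of_int \<lfloor>t * 2 ^ m / T\<rfloor>"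
    by (simp add: i_def)
  then have i: "real i \<le> t * 2 ^ m / T" "t * 2 ^ m / T < real i + 1"
    by linarith+
  have "t * 2 ^ m / T < 2 ^ m"
    using t False T_pos by (simp add: divide_less_eq)
  then have "real i < 2 ^ m"
    using i by linarith
  then have "i < 2 ^ m"
    by (metis of_nat_less_iff of_nat_numeral of_nat_power)
  moreover have "t \<in> dyadic_interval m i"
    using i T_pos by (auto simp: dyadic_interval_def field_simps)
  ultimately show ?thesis by blast
qed

lemma dyadic_interval_Suc_subset: "dyadic_interval (Suc m) j \<subseteq> dyadic_interval m (j div 2)"
proof -
  have "real j \<le> real (2 * (j div 2) + 1)"
    by (intro of_nat_mono) presburger
  then have "real j + 1 \<le> 2 * (real (j div 2) + 1)"
    by simp
  moreover have "2 * real (j div 2) \<le> real j"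
    by linarith
  ultimately
  have "T / 2 ^ m * real (j div 2) \<le> T / 2 ^ m * (real j / 2)"
    "T / 2 ^ m * ((real j + 1) / 2) \<le> T / 2 ^ m * (real (j div 2) + 1)"
    using T_pos by (intro mult_left_mono; simp)+
  then have "T * real (j div 2) / 2 ^ m \<le> T * real j / 2 ^ Suc m"
    "T * (real j + 1) / 2 ^ Suc m \<le> T * (real (j div 2) + 1) / 2 ^ m"
    by (simp_all add: field_simps)
  then show ?thesis
    by (auto simp: dyadic_interval_def)
qed

lemma dyadic_sup_bounds: "0 \<le> dyadic_sup m i \<omega>" "dyadic_sup m i \<omega> \<le> K"
proof -
  obtain q where "q \<in> \<rat> \<inter> dyadic_interval m i"
    using Rats_inter_dyadic_interval_nonempty by blast
  then show "0 \<le> dyadic_sup m i \<omega>"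
    unfolding dyadic_sup_def using capped_bounds by (intro cSUP_upper2[OF bdd_above_capped]) auto
  show "dyadic_sup m i \<omega> \<le> K"
    unfolding dyadic_sup_def using capped_bounds Rats_inter_dyadic_interval_nonempty
    by (intro cSUP_least) auto
qed

lemma dyadic_sup_le:
  "(\<And>s. s \<in> dyadic_interval m i \<Longrightarrow> capped \<omega> s \<le> c) \<Longrightarrow> dyadic_sup m i \<omega> \<le> c"
  unfolding dyadic_sup_def using Rats_inter_dyadic_interval_nonempty by (intro cSUP_least) auto

lemma capped_le_dyadic_sup:
  assumes \<omega>: "\<omega> \<in> \<Omega>" and i: "i < 2 ^ m" and t: "t \<in> dyadic_interval m i"
  shows "capped \<omega> t \<le> dyadic_sup m i \<omega>"
proof (rule ccontr)
  assume "\<not> ?thesis"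
  then have e: "0 < capped \<omega> t - dyadic_sup m i \<omega>" by simp
  have tT: "t \<in> {0..T}"
    using dyadic_interval_subset[OF i] t by auto
  from continuous_on_capped[OF \<omega>, unfolded continuous_on_iff] tT e obtain d where "0 < d"
    and d: "\<And>s. s \<in> {0..T} \<Longrightarrow> dist s t < d \<Longrightarrow> dist (capped \<omega> s) (capped \<omega> t) < capped \<omega> t - dyadic_sup m i \<omega>"
    by metis
  obtain q where q: "q \<in> \<rat>" "q \<in> dyadic_interval m i" "\<bar>q - t\<bar> < d"
    using Rats_near_in_interval[OF dyadic_interval_bounds_less[of i m], of t d] t \<open>0 < d\<close>
    by (auto simp: dyadic_interval_def)
  have "dyadic_sup m i \<omega> < capped \<omega> q"
    using d[of q] q dyadic_interval_subset[OF i] by (auto simp: dist_real_def)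
  moreover have "capped \<omega> q \<le> dyadic_sup m i \<omega>"
    unfolding dyadic_sup_def using q by (intro cSUP_upper[OF _ bdd_above_capped]) auto
  ultimately show False by simp
qed

lemma real_dyadic_level: "real (dyadic_level m i \<omega>) = of_int \<lceil>2 ^ m * dyadic_sup m i \<omega>\<rceil>"
  using dyadic_sup_bounds[of m i \<omega>] by (simp add: dyadic_level_def)

lemma dyadic_level_bounds:
  "dyadic_sup m i \<omega> \<le> real (dyadic_level m i \<omega>) / 2 ^ m"
  "real (dyadic_level m i \<omega>) / 2 ^ m < dyadic_sup m i \<omega> + 1 / 2 ^ m"
proof -
  have "2 ^ m * dyadic_sup m i \<omega> \<le> real (dyadic_level m i \<omega>)"
    "real (dyadic_level m i \<omega>) < 2 ^ m * dyadic_sup m i \<omega> + 1"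
    unfolding real_dyadic_level by linarith+
  then show "dyadic_sup m i \<omega> \<le> real (dyadic_level m i \<omega>) / 2 ^ m"
    "real (dyadic_level m i \<omega>) / 2 ^ m < dyadic_sup m i \<omega> + 1 / 2 ^ m"
    by (simp_all add: field_simps)
qed

text \<open>Refining the partition can only lower the steps, because \<open>\<lceil>2x\<rceil> \<le> 2\<lceil>x\<rceil>\<close>.\<close>
lemma dyadic_level_Suc_le:
  "real (dyadic_level (Suc m) j \<omega>) / 2 ^ Suc m \<le> real (dyadic_level m (j div 2) \<omega>) / 2 ^ m"
proof -
  have "dyadic_sup (Suc m) j \<omega> \<le> dyadic_sup m (j div 2) \<omega>"
    unfolding dyadic_sup_def using Rats_inter_dyadic_interval_nonempty dyadic_interval_Suc_subset[of m j]
    by (intro cSUP_subset_mono bdd_above_capped) auto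
  then have "2 ^ Suc m * dyadic_sup (Suc m) j \<omega> \<le> 2 * (2 ^ m * dyadic_sup m (j div 2) \<omega>)"
    by simp
  also have "\<dots> \<le> 2 * of_int \<lceil>2 ^ m * dyadic_sup m (j div 2) \<omega>\<rceil>"
    by simp
  finally have "2 ^ Suc m * dyadic_sup (Suc m) j \<omega> \<le> of_int (2 * \<lceil>2 ^ m * dyadic_sup m (j div 2) \<omega>\<rceil>)"
    by simp
  then have "\<lceil>2 ^ Suc m * dyadic_sup (Suc m) j \<omega>\<rceil> \<le> 2 * \<lceil>2 ^ m * dyadic_sup m (j div 2) \<omega>\<rceil>"
    by (rule ceiling_le)
  then have "real (dyadic_level (Suc m) j \<omega>) \<le> 2 * real (dyadic_level m (j div 2) \<omega>)"
    unfolding real_dyadic_level by (metis of_int_le_iff of_int_mult of_int_numeral)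
  then show ?thesis by (simp add: field_simps)
qed

lemma staircase_of_Suc_subset: "staircase_of (Suc m) \<omega> \<subseteq> staircase_of m \<omega>"
proof
  fix p assume "p \<in> staircase_of (Suc m) \<omega>"
  then obtain j where j: "j < 2 ^ Suc m" "fst p \<in> dyadic_interval (Suc m) j" "0 \<le> snd p"
    "snd p \<le> level_height (Suc m) (dyadic_level (Suc m) j \<omega>)"
    by (auto simp: staircase_of_def staircase_def mem_Times_iff)
  have "level_height (Suc m) (dyadic_level (Suc m) j \<omega>) \<le> level_height m (dyadic_level m (j div 2) \<omega>)"
    unfolding level_height_def using dyadic_level_Suc_le[of m j \<omega>] by simp
  moreover have "j div 2 < 2 ^ m"
    using j(1) by auto
  ultimately show "p \<in> staircase_of m \<omega>"
    using j dyadic_interval_Suc_subset[of m j] unfolding staircase_of_def staircase_def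
    by (auto simp: mem_Times_iff intro!: bexI[of _ "j div 2"])
qed

lemma decseq_staircase_of: "decseq (\<lambda>m. staircase_of m \<omega>)"
  by (rule decseq_SucI) (rule staircase_of_Suc_subset)

lemma hypograph_subset_staircase_of: "\<omega> \<in> \<Omega> \<Longrightarrow> hypograph \<omega> \<subseteq> staircase_of m \<omega>"
proof safe
  fix t y assume \<omega>: "\<omega> \<in> \<Omega>" and "(t, y) \<in> hypograph \<omega>"
  then have t: "t \<in> {0..T}" and y: "0 \<le> y" "y \<le> capped \<omega> t"
    by (auto simp: hypograph_def)
  obtain i where i: "i < 2 ^ m" "t \<in> dyadic_interval m i"
    using dyadic_interval_cover[OF t] by blast
  have "y \<le> real (dyadic_level m i \<omega>) / 2 ^ m"
    using y capped_le_dyadic_sup[OF \<omega> i] dyadic_level_bounds(1)[of m i \<omega>] by linarith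
  then have "y \<le> level_height m (dyadic_level m i \<omega>)"
    using y capped_bounds[of \<omega> t] by (simp add: level_height_def)
  then show "(t, y) \<in> staircase_of m \<omega>"
    using i y unfolding staircase_of_def staircase_def by (auto intro!: bexI[of _ i])
qed

lemma Inter_staircase_of_subset_hypograph:
  assumes \<omega>: "\<omega> \<in> \<Omega>"
  shows "(\<Inter>m. staircase_of m \<omega>) \<subseteq> hypograph \<omega>"
proof safe
  fix t y assume ty: "(t, y) \<in> (\<Inter>m. staircase_of m \<omega>)"
  have step: "\<exists>i<2 ^ m. t \<in> dyadic_interval m i \<and> 0 \<le> y \<and> y \<le> level_height m (dyadic_level m i \<omega>)" for m
    using ty by (auto simp: staircase_of_def staircase_def)
  from step[of 0] obtain i where "i < 2 ^ 0" "t \<in> dyadic_interval 0 i" "0 \<le> y"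
    by blast
  then have t: "t \<in> {0..T}" and "0 \<le> y"
    using dyadic_interval_subset[of i 0] by auto
  have "y \<le> capped \<omega> t"
  proof (rule ccontr)
    assume "\<not> ?thesis"
    then have e: "0 < (y - capped \<omega> t) / 2" by simp
    from continuous_on_capped[OF \<omega>, unfolded continuous_on_iff] t e obtain d where "0 < d"
      and d: "\<And>s. s \<in> {0..T} \<Longrightarrow> dist s t < d \<Longrightarrow> dist (capped \<omega> s) (capped \<omega> t) < (y - capped \<omega> t) / 2"
      by metis
    obtain m where m: "T / 2 ^ m < d" "1 / 2 ^ m < (y - capped \<omega> t) / 2"
      using eventually_conj[OF eventually_const_div_pow2_less[OF \<open>0 < d\<close>, of T]
          eventually_const_div_pow2_less[OF e, of 1]]
      by (auto simp: eventually_sequentially)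
    obtain i where i: "i < 2 ^ m" "t \<in> dyadic_interval m i" "y \<le> level_height m (dyadic_level m i \<omega>)"
      using step[of m] by blast
    have "dyadic_sup m i \<omega> \<le> capped \<omega> t + (y - capped \<omega> t) / 2"
    proof (rule dyadic_sup_le)
      fix s assume s: "s \<in> dyadic_interval m i"
      then have "dist s t < d"
        using dyadic_interval_diameter[OF s i(2)] m(1) by (simp add: dist_real_def)
      moreover have "s \<in> {0..T}"
        using s dyadic_interval_subset[OF i(1)] by auto
      ultimately have "\<bar>capped \<omega> s - capped \<omega> t\<bar> < (y - capped \<omega> t) / 2"
        using d[of s] by (simp add: dist_real_def)
      then show "capped \<omega> s \<le> capped \<omega> t + (y - capped \<omega> t) / 2"
        by linarith
    qed
    moreover have "y \<le> real (dyadic_level m i \<omega>) / 2 ^ m"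
      using i(3) by (simp add: level_height_def)
    ultimately show False
      using m(2) dyadic_level_bounds(2)[of m i \<omega>] by argo
  qed
  then show "(t, y) \<in> hypograph \<omega>"
    using t \<open>0 \<le> y\<close> by (simp add: hypograph_def)
qed

lemma hypograph_eq_Inter_staircase_of: "\<omega> \<in> \<Omega> \<Longrightarrow> hypograph \<omega> = (\<Inter>m. staircase_of m \<omega>)"
  using hypograph_subset_staircase_of Inter_staircase_of_subset_hypograph by blast

lemma closed_staircase: "closed (staircase m c)"
  unfolding staircase_def dyadic_interval_def by (auto intro!: closed_UN closed_Times)

lemma staircase_subset_box: "staircase m c \<subseteq> {0..T} \<times> {0..K}"
  using dyadic_interval_subset by (auto simp: staircase_def level_height_def)

lemma staircase_sets: "staircase m c \<in> sets lborel"
  using closed_staircase by (simp add: borel_closed)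

lemma emeasure_staircase_finite: "emeasure lborel (staircase m c) \<noteq> \<infinity>"
proof -
  have "{0..T} \<times> {0..K} = cbox (0, 0) (T, K)"
    by (auto simp: cbox_Pair_eq)
  then have "emeasure lborel ({0..T} \<times> {0..K}) < \<infinity>"
    using emeasure_lborel_cbox_finite by metis
  moreover have "emeasure lborel (staircase m c) \<le> emeasure lborel ({0..T} \<times> {0..K})"
    by (intro emeasure_mono staircase_subset_box) (simp add: borel_closed closed_Times)
  ultimately show ?thesis by (simp add: top_unique)
qed

lemma set_integrable_capped: "\<omega> \<in> \<Omega> \<Longrightarrow> set_integrable lborel {0..T} (capped \<omega>)"
  by (rule borel_integrable_atLeastAtMost'[OF continuous_on_capped])

lemma area_nonneg: "0 \<le> area \<omega>"
  unfolding area_def set_lebesgue_integral_def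
  using capped_bounds by (intro integral_nonneg_AE) (auto simp: indicator_def)

lemma emeasure_hypograph:
  assumes \<omega>: "\<omega> \<in> \<Omega>"
  shows "emeasure lborel (hypograph \<omega>) = ennreal (area \<omega>)"
proof -
  have "closed (hypograph \<omega>)"
    using hypograph_eq_Inter_staircase_of[OF \<omega>] closed_staircase unfolding staircase_of_def by auto
  then have "hypograph \<omega> \<in> sets (lborel \<Otimes>\<^sub>M lborel)"
    unfolding lborel_prod by (simp add: borel_closed)
  then have "emeasure lborel (hypograph \<omega>) = (\<integral>\<^sup>+t. emeasure lborel (Pair t -` hypograph \<omega>) \<partial>lborel)"
    by (simp add: lborel.emeasure_pair_measure_alt flip: lborel_prod)
  also have "\<dots> = (\<integral>\<^sup>+t. ennreal (indicator {0..T} t * capped \<omega> t) \<partial>lborel)"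
  proof (rule nn_integral_cong)
    fix t :: real
    have "Pair t -` hypograph \<omega> = (if t \<in> {0..T} then {0..capped \<omega> t} else {})"
      by (auto simp: hypograph_def)
    then show "emeasure lborel (Pair t -` hypograph \<omega>) = ennreal (indicator {0..T} t * capped \<omega> t)"
      using capped_bounds[of \<omega> t] by simp
  qed
  also have "\<dots> = ennreal (area \<omega>)"
    unfolding area_def set_lebesgue_integral_def
    using set_integrable_capped[OF \<omega>] capped_bounds unfolding set_integrable_def
    by (subst nn_integral_eq_integral) (auto simp: indicator_def)
  finally show ?thesis .
qed

lemma measure_staircase_of_tendsto:
  assumes \<omega>: "\<omega> \<in> \<Omega>"
  shows "(\<lambda>m. measure lborel (staircase_of m \<omega>)) \<longlonglongrightarrow> area \<omega>"
proof -
  have "(\<lambda>m. emeasure lborel (staircase_of m \<omega>)) \<longlonglongrightarrow> emeasure lborel (\<Inter>m. staircase_of m \<omega>)"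
    using decseq_staircase_of staircase_sets emeasure_staircase_finite unfolding staircase_of_def
    by (intro Lim_emeasure_decseq) auto
  then have "(\<lambda>m. emeasure lborel (staircase_of m \<omega>)) \<longlonglongrightarrow> ennreal (area \<omega>)"
    using hypograph_eq_Inter_staircase_of[OF \<omega>] emeasure_hypograph[OF \<omega>] by simp
  from tendsto_enn2real[OF this area_nonneg] show ?thesis
    by (simp add: measure_def)
qed

lemma measure_staircase_of_Suc_le: "measure lborel (staircase_of (Suc m) \<omega>) \<le> measure lborel (staircase_of m \<omega>)"
  using staircase_of_Suc_subset staircase_sets emeasure_staircase_finite unfolding staircase_of_def
  by (intro measure_mono_fmeasurable) (auto intro: fmeasurableI simp: less_top)

lemma level_code_in_level_codes: "level_code m \<omega> \<in> level_codes m"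
proof -
  have "dyadic_level m i \<omega> \<le> nat \<lceil>2 ^ m * K\<rceil>" for i
    unfolding dyadic_level_def using dyadic_sup_bounds[of m i \<omega>]
    by (intro nat_mono ceiling_mono) simp
  then show ?thesis
    by (auto simp: level_code_def level_codes_def)
qed

lemma staircase_level_code: "staircase m (level_code m \<omega>) = staircase_of m \<omega>"
  unfolding staircase_def staircase_of_def level_code_def by auto

lemma level_code_eq_iff:
  "level_code m \<omega> = c \<longleftrightarrow> c \<in> extensional {..<2 ^ m} \<and> (\<forall>i<2 ^ m. dyadic_level m i \<omega> = c i)"
proof
  assume "c \<in> extensional {..<2 ^ m} \<and> (\<forall>i<2 ^ m. dyadic_level m i \<omega> = c i)"
  then show "level_code m \<omega> = c"
    unfolding level_code_def by (intro extensionalityI[OF restrict_extensional]) auto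
qed (auto simp: level_code_def)

lemma finite_level_codes: "finite (level_codes m)"
  unfolding level_codes_def by (intro finite_PiE) auto

lemma sum_level_codes:
  fixes f :: "(nat \<Rightarrow> nat) \<Rightarrow> 'b :: semiring_1"
  assumes "\<omega> \<in> \<Omega>"
  shows "(\<Sum>c\<in>level_codes m. indicator {\<omega>' \<in> \<Omega>. level_code m \<omega>' = c} \<omega> * f c) = f (level_code m \<omega>)"
proof -
  have "(\<Sum>c\<in>level_codes m. indicator {\<omega>' \<in> \<Omega>. level_code m \<omega>' = c} \<omega> * f c)
      = (\<Sum>c\<in>level_codes m. if level_code m \<omega> = c then f c else 0)"
    using assms by (intro sum.cong) (auto simp: indicator_def)
  then show ?thesis
    using level_code_in_level_codes finite_level_codes by (simp add: sum.delta)
qed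

context
  fixes \<F> :: "'a measure"
  assumes space_\<F>: "space \<F> = \<Omega>"
    and measurable_F: "\<And>t. t \<in> {0..T} \<Longrightarrow> F t \<in> borel_measurable \<F>"
begin

lemma dyadic_sup_measurable: "i < 2 ^ m \<Longrightarrow> dyadic_sup m i \<in> borel_measurable \<F>"
  unfolding dyadic_sup_def[abs_def] capped_def
proof (rule borel_measurable_cSUP)
  show "countable (\<rat> \<inter> dyadic_interval m i)"
    by (intro countable_Int1 countable_rat)
  show "bdd_above ((\<lambda>q. min K (F q \<omega>)) ` (\<rat> \<inter> dyadic_interval m i))" for \<omega>
    by (intro bdd_aboveI2[where M=K]) simp
  fix q assume "i < 2 ^ m" "q \<in> \<rat> \<inter> dyadic_interval m i"
  then have "q \<in> {0..T}"
    using dyadic_interval_subset by blast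
  then show "(\<lambda>\<omega>. min K (F q \<omega>)) \<in> borel_measurable \<F>"
    by (intro borel_measurable_min borel_measurable_const measurable_F)
qed

lemma dyadic_level_measurable: "i < 2 ^ m \<Longrightarrow> dyadic_level m i \<in> measurable \<F> (count_space UNIV)"
proof -
  assume "i < 2 ^ m"
  then have "(\<lambda>\<omega>. 2 ^ m * dyadic_sup m i \<omega>) \<in> borel_measurable \<F>"
    by (intro borel_measurable_times borel_measurable_const dyadic_sup_measurable)
  from measurable_compose[OF measurable_compose[OF this measurable_real_ceiling], of nat]
  show ?thesis
    unfolding dyadic_level_def[abs_def] by simp
qed

lemma level_code_event: "{\<omega> \<in> \<Omega>. level_code m \<omega> = c} \<in> sets \<F>"
proof -
  have "{..<(2::nat) ^ m} \<noteq> {}"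
    by (simp add: lessThan_empty_iff)
  then have "(\<Inter>i<2 ^ m. {\<omega> \<in> space \<F>. dyadic_level m i \<omega> = c i}) \<inter> space \<F> \<in> sets \<F>"
    using dyadic_level_measurable
    by (intro sets.Int sets.top sets.finite_INT) (auto intro: measurable_sets)
  moreover have "{\<omega> \<in> \<Omega>. level_code m \<omega> = c}
      = (if c \<in> extensional {..<2 ^ m} then (\<Inter>i<2 ^ m. {\<omega> \<in> space \<F>. dyadic_level m i \<omega> = c i}) \<inter> space \<F> else {})"
    using level_code_eq_iff[of m _ c] space_\<F> by auto
  ultimately show ?thesis by simp
qed

lemma measure_staircase_of_measurable: "(\<lambda>\<omega>. measure lborel (staircase_of m \<omega>)) \<in> borel_measurable \<F>"
proof -
  have "(\<lambda>\<omega>. \<Sum>c\<in>level_codes m. indicator {\<omega>' \<in> \<Omega>. level_code m \<omega>' = c} \<omega> * measure lborel (staircase m c))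
      \<in> borel_measurable \<F>"
    by (intro borel_measurable_sum borel_measurable_times borel_measurable_const
        borel_measurable_indicator level_code_event)
  moreover have "(\<Sum>c\<in>level_codes m. indicator {\<omega>' \<in> \<Omega>. level_code m \<omega>' = c} \<omega> * measure lborel (staircase m c))
      = measure lborel (staircase_of m \<omega>)" if "\<omega> \<in> space \<F>" for \<omega>
    using that space_\<F> sum_level_codes[where f="\<lambda>c. measure lborel (staircase m c)"]
    by (simp add: staircase_level_code)
  ultimately show ?thesis
    by (rule measurable_cong[THEN iffD1, rotated])
qed

lemma area_measurable: "area \<in> borel_measurable \<F>"
proof (rule borel_measurable_LIMSEQ_real)
  show "(\<lambda>m. measure lborel (staircase_of m \<omega>)) \<longlonglongrightarrow> area \<omega>" if "\<omega> \<in> space \<F>" for \<omega>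
    using that space_\<F> by (intro measure_staircase_of_tendsto) simp
qed (rule measure_staircase_of_measurable)

end

end

section \<open>Thinning a Poisson process by a random hypograph\<close>

locale poisson_thinning = capped_paths T K F "space M" + prob_space M
  for T K :: real and F :: "real \<Rightarrow> 'a \<Rightarrow> real" and M :: "'a measure" +
  fixes \<F> :: "'a measure" and N :: "'a \<Rightarrow> (real \<times> real) set"
  assumes subalgebra: "subalgebra M \<F>"
    and measurable_F: "\<And>t. t \<in> {0..T} \<Longrightarrow> F t \<in> borel_measurable \<F>"
    and finite_points: "\<And>\<omega>. \<omega> \<in> space M \<Longrightarrow> finite (N \<omega>)"
    and avoidance_event: "\<And>S. S \<in> sets lborel \<Longrightarrow> S \<subseteq> {0..T} \<times> {0..K} \<Longrightarrow>
        {\<omega> \<in> space M. N \<omega> \<inter> S = {}} \<in> events"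
    and avoidance_independent: "\<And>S A. S \<in> sets lborel \<Longrightarrow> S \<subseteq> {0..T} \<times> {0..K} \<Longrightarrow> A \<in> sets \<F> \<Longrightarrow>
        prob (A \<inter> {\<omega> \<in> space M. N \<omega> \<inter> S = {}}) = prob A * exp (- measure lborel S)"
begin

definition avoids :: "(real \<times> real) set \<Rightarrow> 'a set" where
  "avoids S = {\<omega> \<in> space M. N \<omega> \<inter> S = {}}"

definition avoids_staircase :: "nat \<Rightarrow> 'a set" where
  "avoids_staircase m = {\<omega> \<in> space M. N \<omega> \<inter> staircase_of m \<omega> = {}}"

definition accepted :: "'a set" where
  "accepted = {\<omega> \<in> space M. N \<omega> \<inter> hypograph \<omega> = {}}"

lemma space_\<F>: "space \<F> = space M"
  using subalgebra by (simp add: subalgebra_def)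

lemma measurable_from_\<F>: "f \<in> measurable \<F> N' \<Longrightarrow> f \<in> measurable M N'"
  by (rule measurable_from_subalg[OF subalgebra])

lemma avoids_event: "S \<in> sets lborel \<Longrightarrow> S \<subseteq> {0..T} \<times> {0..K} \<Longrightarrow> avoids S \<in> events"
  unfolding avoids_def by (rule avoidance_event)

text \<open>The avoidance event is independent of \<open>\<F>\<close>, so \<open>M\<close> weighted by its indicator and \<open>M\<close>
  scaled by its probability agree on \<open>\<F>\<close>.\<close>
lemma nn_integral_avoids:
  assumes S: "S \<in> sets lborel" "S \<subseteq> {0..T} \<times> {0..K}" and f: "f \<in> borel_measurable \<F>"
  shows "(\<integral>\<^sup>+\<omega>. f \<omega> * indicator (avoids S) \<omega> \<partial>M) = (\<integral>\<^sup>+\<omega>. f \<omega> * ennreal (exp (- measure lborel S)) \<partial>M)"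
proof -
  let ?c = "ennreal (exp (- measure lborel S))"
  have H: "avoids S \<in> events"
    using S by (rule avoids_event)
  have fM: "f \<in> borel_measurable M"
    by (rule measurable_from_\<F>[OF f])
  have sub: "subalgebra (density M (indicator (avoids S))) \<F>" "subalgebra (density M (\<lambda>_. ?c)) \<F>"
    using subalgebra by (auto simp: subalgebra_def)
  have "restr_to_subalg (density M (indicator (avoids S))) \<F> = restr_to_subalg (density M (\<lambda>_. ?c)) \<F>"
  proof (rule measure_eqI)
    fix A assume "A \<in> sets (restr_to_subalg (density M (indicator (avoids S))) \<F>)"
    then have A\<F>: "A \<in> sets \<F>" and A: "A \<in> events"
      using sub subalgebra by (auto simp: sets_restr_to_subalg subalgebra_def)
    have "emeasure (density M (indicator (avoids S))) A = emeasure M (A \<inter> avoids S)"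
      using A H by (simp add: emeasure_density indicator_inter_arith[symmetric] Int_commute)
    also have "\<dots> = ?c * emeasure M A"
      using avoidance_independent[OF S A\<F>] A H
      by (simp add: emeasure_eq_measure avoids_def ennreal_mult' mult.commute)
    also have "\<dots> = emeasure (density M (\<lambda>_. ?c)) A"
      using A by (simp add: emeasure_density nn_integral_cmult_indicator)
    finally show "emeasure (restr_to_subalg (density M (indicator (avoids S))) \<F>) A
        = emeasure (restr_to_subalg (density M (\<lambda>_. ?c)) \<F>) A"
      using sub A\<F> by (simp add: emeasure_restr_to_subalg)
  qed (simp add: sets_restr_to_subalg[OF sub(1)] sets_restr_to_subalg[OF sub(2)])
  then have "(\<integral>\<^sup>+\<omega>. f \<omega> \<partial>density M (indicator (avoids S))) = (\<integral>\<^sup>+\<omega>. f \<omega> \<partial>density M (\<lambda>_. ?c))"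
    using nn_integral_subalgebra2[OF sub(1) f] nn_integral_subalgebra2[OF sub(2) f] by simp
  then show ?thesis
    using fM H by (simp add: nn_integral_density mult.commute)
qed

lemma indicator_avoids_staircase:
  "\<omega> \<in> space M \<Longrightarrow> indicator (avoids_staircase m) \<omega>
     = (\<Sum>c\<in>level_codes m. indicator {\<omega>' \<in> space M. level_code m \<omega>' = c} \<omega> * indicator (avoids (staircase m c)) \<omega> :: ennreal)"
  using sum_level_codes[where f="\<lambda>c. indicator (avoids (staircase m c)) \<omega> :: ennreal"]
  by (simp add: staircase_level_code avoids_def avoids_staircase_def indicator_def)

lemma level_code_event_M: "{\<omega> \<in> space M. level_code m \<omega> = c} \<in> events"
  using level_code_event[OF space_\<F> measurable_F] subalgebra by (auto simp: subalgebra_def)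

lemma avoids_staircase_event: "avoids_staircase m \<in> events"
proof -
  have "(\<lambda>\<omega>. indicator (avoids_staircase m) \<omega> :: ennreal) \<in> borel_measurable M"
    by (subst measurable_cong[OF indicator_avoids_staircase])
      (auto intro!: borel_measurable_sum borel_measurable_times_ennreal
        borel_measurable_indicator[OF level_code_event_M]
        borel_measurable_indicator[OF avoids_event[OF staircase_sets staircase_subset_box]])
  then have "avoids_staircase m \<inter> space M \<in> events"
    using borel_measurable_indicator_iff by blast
  moreover have "avoids_staircase m \<subseteq> space M"
    by (auto simp: avoids_staircase_def)
  ultimately show ?thesis
    by (simp add: Int_absorb2)
qed

lemma nn_integral_avoids_staircase:
  assumes f: "f \<in> borel_measurable \<F>"
  shows "(\<integral>\<^sup>+\<omega>. f \<omega> * indicator (avoids_staircase m) \<omega> \<partial>M)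
    = (\<integral>\<^sup>+\<omega>. f \<omega> * ennreal (exp (- measure lborel (staircase_of m \<omega>))) \<partial>M)"
proof -
  let ?L = "\<lambda>c. {\<omega>' \<in> space M. level_code m \<omega>' = c}"
  let ?e = "\<lambda>c. ennreal (exp (- measure lborel (staircase m c)))"
  have fL: "(\<lambda>\<omega>. f \<omega> * indicator (?L c) \<omega>) \<in> borel_measurable \<F>" for c
    using f level_code_event[OF space_\<F> measurable_F] by (simp add: space_\<F>)
  have "(\<integral>\<^sup>+\<omega>. f \<omega> * indicator (avoids_staircase m) \<omega> \<partial>M)
      = (\<integral>\<^sup>+\<omega>. (\<Sum>c\<in>level_codes m. f \<omega> * indicator (?L c) \<omega> * indicator (avoids (staircase m c)) \<omega>) \<partial>M)"
    by (intro nn_integral_cong) (simp add: indicator_avoids_staircase sum_distrib_left mult.assoc)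
  also have "\<dots> = (\<Sum>c\<in>level_codes m. \<integral>\<^sup>+\<omega>. f \<omega> * indicator (?L c) \<omega> * indicator (avoids (staircase m c)) \<omega> \<partial>M)"
    by (intro nn_integral_sum borel_measurable_times_ennreal[OF measurable_from_\<F>[OF fL]]
        borel_measurable_indicator[OF avoids_event[OF staircase_sets staircase_subset_box]])
  also have "\<dots> = (\<Sum>c\<in>level_codes m. \<integral>\<^sup>+\<omega>. f \<omega> * indicator (?L c) \<omega> * ?e c \<partial>M)"
    using fL by (intro sum.cong refl nn_integral_avoids staircase_sets staircase_subset_box)
  also have "\<dots> = (\<integral>\<^sup>+\<omega>. (\<Sum>c\<in>level_codes m. f \<omega> * indicator (?L c) \<omega> * ?e c) \<partial>M)"
    using measurable_from_\<F>[OF fL] by (intro nn_integral_sum[symmetric]) auto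
  also have "\<dots> = (\<integral>\<^sup>+\<omega>. f \<omega> * ennreal (exp (- measure lborel (staircase_of m \<omega>))) \<partial>M)"
  proof (rule nn_integral_cong)
    fix \<omega> assume "\<omega> \<in> space M"
    then have "(\<Sum>c\<in>level_codes m. indicator (?L c) \<omega> * (f \<omega> * ?e c)) = f \<omega> * ?e (level_code m \<omega>)"
      by (rule sum_level_codes)
    then show "(\<Sum>c\<in>level_codes m. f \<omega> * indicator (?L c) \<omega> * ?e c)
        = f \<omega> * ennreal (exp (- measure lborel (staircase_of m \<omega>)))"
      by (simp add: staircase_level_code ac_simps)
  qed
  finally show ?thesis .
qed

lemma incseq_avoids_staircase: "incseq avoids_staircase"
  using staircase_of_Suc_subset by (intro incseq_SucI) (auto simp: avoids_staircase_def)

text \<open>Only finitely many points are involved, so a point configuration missing the hypograph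
  already misses one of the staircases shrinking down to it.\<close>
lemma accepted_eq_UN_avoids_staircase: "accepted = (\<Union>m. avoids_staircase m)"
proof safe
  fix \<omega> assume "\<omega> \<in> accepted"
  then have \<omega>: "\<omega> \<in> space M" and "N \<omega> \<inter> (\<Inter>m. staircase_of m \<omega>) = {}"
    using hypograph_eq_Inter_staircase_of by (auto simp: accepted_def)
  then obtain m where "N \<omega> \<inter> staircase_of m \<omega> = {}"
    using finite_disjoint_from_decseq[OF decseq_staircase_of finite_points] by blast
  then show "\<omega> \<in> (\<Union>m. avoids_staircase m)"
    using \<omega> by (auto simp: avoids_staircase_def)
qed (use hypograph_subset_staircase_of in \<open>auto simp: accepted_def avoids_staircase_def\<close>)

lemma accepted_event: "accepted \<in> events"
  using avoids_staircase_event by (auto simp: accepted_eq_UN_avoids_staircase)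

lemma SUP_exp_measure_staircase_of:
  assumes "\<omega> \<in> space M"
  shows "(SUP m. ennreal (exp (- measure lborel (staircase_of m \<omega>)))) = ennreal (exp (- area \<omega>))"
proof (rule LIMSEQ_unique[OF LIMSEQ_SUP])
  show "incseq (\<lambda>m. ennreal (exp (- measure lborel (staircase_of m \<omega>))))"
    using measure_staircase_of_Suc_le by (intro incseq_SucI ennreal_leI) simp
  show "(\<lambda>m. ennreal (exp (- measure lborel (staircase_of m \<omega>)))) \<longlonglongrightarrow> ennreal (exp (- area \<omega>))"
    using assms by (intro tendsto_ennrealI tendsto_exp tendsto_minus measure_staircase_of_tendsto)
qed

theorem nn_integral_accepted:
  assumes f: "f \<in> borel_measurable \<F>"
  shows "(\<integral>\<^sup>+\<omega>. f \<omega> * indicator accepted \<omega> \<partial>M) = (\<integral>\<^sup>+\<omega>. f \<omega> * ennreal (exp (- area \<omega>)) \<partial>M)"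
proof -
  have fM: "f \<in> borel_measurable M"
    by (rule measurable_from_\<F>[OF f])
  have e: "(\<lambda>\<omega>. ennreal (exp (- measure lborel (staircase_of m \<omega>)))) \<in> borel_measurable M" for m
    using measurable_from_\<F>[OF measure_staircase_of_measurable[OF space_\<F> measurable_F]] by measurable
  have "(\<integral>\<^sup>+\<omega>. f \<omega> * indicator accepted \<omega> \<partial>M) = emeasure (density M f) (\<Union>m. avoids_staircase m)"
    using fM accepted_event by (simp add: emeasure_density accepted_eq_UN_avoids_staircase)
  also have "\<dots> = (SUP m. emeasure (density M f) (avoids_staircase m))"
    using incseq_avoids_staircase avoids_staircase_event by (intro SUP_emeasure_incseq[symmetric]) auto
  also have "\<dots> = (SUP m. \<integral>\<^sup>+\<omega>. f \<omega> * ennreal (exp (- measure lborel (staircase_of m \<omega>))) \<partial>M)"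
    using fM avoids_staircase_event by (simp add: emeasure_density nn_integral_avoids_staircase[OF f])
  also have "\<dots> = (\<integral>\<^sup>+\<omega>. (SUP m. f \<omega> * ennreal (exp (- measure lborel (staircase_of m \<omega>)))) \<partial>M)"
    using fM e measure_staircase_of_Suc_le
    by (intro nn_integral_monotone_convergence_SUP[symmetric] incseq_SucI le_funI mult_left_mono ennreal_leI) auto
  also have "\<dots> = (\<integral>\<^sup>+\<omega>. f \<omega> * ennreal (exp (- area \<omega>)) \<partial>M)"
    by (intro nn_integral_cong) (simp add: SUP_mult_left_ennreal[symmetric] SUP_exp_measure_staircase_of)
  finally show ?thesis .
qed

lemma integrable_exp_neg_area:
  assumes "integrable M f"
  shows "integrable M (\<lambda>\<omega>. f \<omega> * exp (- area \<omega>))"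
proof (rule Bochner_Integration.integrable_bound[OF assms])
  show "(\<lambda>\<omega>. f \<omega> * exp (- area \<omega>)) \<in> borel_measurable M"
    using assms measurable_from_\<F>[OF area_measurable[OF space_\<F> measurable_F]] by measurable
  show "AE \<omega> in M. norm (f \<omega> * exp (- area \<omega>)) \<le> norm (f \<omega>)"
    using area_nonneg by (auto simp: abs_mult intro!: mult_left_le)
qed

corollary integral_accepted:
  assumes f: "f \<in> borel_measurable \<F>" and int: "integrable M f"
  shows "(\<integral>\<omega>. f \<omega> * indicator accepted \<omega> \<partial>M) = (\<integral>\<omega>. f \<omega> * exp (- area \<omega>) \<partial>M)"
proof -
  have nn: "(\<integral>\<^sup>+\<omega>. ennreal (s * (f \<omega> * indicator accepted \<omega>)) \<partial>M)
      = (\<integral>\<^sup>+\<omega>. ennreal (s * (f \<omega> * exp (- area \<omega>))) \<partial>M)" for s :: real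
  proof -
    have "(\<lambda>\<omega>. ennreal (s * f \<omega>)) \<in> borel_measurable \<F>"
      using f by measurable
    moreover have "ennreal (s * (f \<omega> * indicator accepted \<omega>)) = ennreal (s * f \<omega>) * indicator accepted \<omega>"
      for \<omega> by (simp add: indicator_def)
    moreover have "ennreal (s * (f \<omega> * exp (- area \<omega>))) = ennreal (s * f \<omega>) * ennreal (exp (- area \<omega>))"
      for \<omega> by (simp add: ennreal_mult'' flip: mult.assoc)
    ultimately show ?thesis
      using nn_integral_accepted by presburger
  qed
  have "integrable M (\<lambda>\<omega>. f \<omega> * indicator accepted \<omega>)"
    using accepted_event int by (rule integrable_real_mult_indicator)
  then show ?thesis
    using nn[of 1] nn[of "-1"]
    by (simp add: real_lebesgue_integral_def integrable_exp_neg_area[OF int])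
qed

end

section \<open>Rejection sampling along a Brownian bridge\<close>

locale bridge_rejection = prob_space M
  for M :: "'a measure" +
  fixes T K x :: real and \<phi> :: "real \<Rightarrow> real"
    and W :: "real \<Rightarrow> 'a \<Rightarrow> real" and \<Theta> :: "'a \<Rightarrow> real" and N :: "'a \<Rightarrow> (real \<times> real) set"
  assumes T_pos: "0 < T" and K_pos: "0 < K"
    and continuous_\<phi>: "continuous_on UNIV \<phi>" and \<phi>_nonneg: "\<And>y. 0 \<le> \<phi> y"
    and W_bm: "brownian_motion M T W"
    and \<Theta>_measurable: "\<Theta> \<in> borel_measurable M"
    and N_ppp: "poisson_point_process M ({0..T} \<times> {0..K}) N"
    and N_indep: "indep_set
          (rv_events M (Pi\<^sub>M {0..T} (\<lambda>_. borel) \<Otimes>\<^sub>M borel) (\<lambda>\<omega>. (restrict (\<lambda>t. W t \<omega>) {0..T}, \<Theta> \<omega>)))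
          (rv_events M (Pi\<^sub>M {S \<in> sets lborel. S \<subseteq> {0..T} \<times> {0..K}} (\<lambda>_. count_space UNIV))
             (\<lambda>\<omega>. restrict (\<lambda>S. card (N \<omega> \<inter> S)) {S \<in> sets lborel. S \<subseteq> {0..T} \<times> {0..K}}))"
begin

abbreviation "B \<equiv> bridge x T W \<Theta>"

definition path_sigma :: "'a measure" where
  "path_sigma = vimage_algebra (space M) (\<lambda>\<omega>. (restrict (\<lambda>t. W t \<omega>) {0..T}, \<Theta> \<omega>))
     (Pi\<^sub>M {0..T} (\<lambda>_. borel) \<Otimes>\<^sub>M borel)"

lemma bridge_end: "B T \<omega> = \<Theta> \<omega>"
  using T_pos by (simp add: bridge_def)

lemma continuous_on_bridge: "\<omega> \<in> space M \<Longrightarrow> continuous_on {0..T} (\<lambda>t. B t \<omega>)"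
  using W_bm T_pos unfolding bridge_def brownian_motion_def by (intro continuous_intros) auto

lemma sets_path_sigma: "sets path_sigma = rv_events M (Pi\<^sub>M {0..T} (\<lambda>_. borel) \<Otimes>\<^sub>M borel)
    (\<lambda>\<omega>. (restrict (\<lambda>t. W t \<omega>) {0..T}, \<Theta> \<omega>))"
  unfolding path_sigma_def rv_events_def
  by (rule sets_vimage_algebra2) (auto simp: space_pair_measure space_PiM)

lemma subalgebra_path_sigma: "subalgebra M path_sigma"
proof -
  have "(\<lambda>\<omega>. (restrict (\<lambda>t. W t \<omega>) {0..T}, \<Theta> \<omega>)) \<in> M \<rightarrow>\<^sub>M Pi\<^sub>M {0..T} (\<lambda>_. borel) \<Otimes>\<^sub>M borel"
    using W_bm \<Theta>_measurable unfolding brownian_motion_def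
    by (intro measurable_Pair measurable_restrict) auto
  then show ?thesis
    unfolding subalgebra_def sets_path_sigma rv_events_def
    by (auto simp: path_sigma_def intro: measurable_sets)
qed

lemma bridge_measurable_path_sigma: "t \<in> {0..T} \<Longrightarrow> B t \<in> borel_measurable path_sigma"
proof -
  let ?Y = "\<lambda>\<omega>. (restrict (\<lambda>t. W t \<omega>) {0..T}, \<Theta> \<omega>)"
  have Y: "?Y \<in> path_sigma \<rightarrow>\<^sub>M Pi\<^sub>M {0..T} (\<lambda>_. borel) \<Otimes>\<^sub>M borel"
    unfolding path_sigma_def
    by (rule measurable_vimage_algebra1) (auto simp: space_pair_measure space_PiM)
  have "(\<lambda>\<omega>. fst (?Y \<omega>) s) \<in> borel_measurable path_sigma" if "s \<in> {0..T}" for s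
    using that by (intro measurable_compose[OF Y] measurable_compose[OF measurable_fst]
        measurable_component_singleton)
  moreover have "(\<lambda>\<omega>. snd (?Y \<omega>)) \<in> borel_measurable path_sigma"
    by (intro measurable_compose[OF Y measurable_snd])
  moreover assume "t \<in> {0..T}"
  ultimately show ?thesis
    using T_pos unfolding bridge_def by simp
qed

lemma N_avoidance:
  assumes S: "S \<in> sets lborel" "S \<subseteq> {0..T} \<times> {0..K}"
  shows "{\<omega> \<in> space M. N \<omega> \<inter> S = {}} \<in> rv_events M
      (Pi\<^sub>M {S \<in> sets lborel. S \<subseteq> {0..T} \<times> {0..K}} (\<lambda>_. count_space UNIV))
      (\<lambda>\<omega>. restrict (\<lambda>S. card (N \<omega> \<inter> S)) {S \<in> sets lborel. S \<subseteq> {0..T} \<times> {0..K}})"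
    (is "_ \<in> rv_events M ?C ?Z")
    and "{\<omega> \<in> space M. N \<omega> \<inter> S = {}} \<in> events"
    and "prob {\<omega> \<in> space M. N \<omega> \<inter> S = {}} = exp (- measure lborel S)"
proof -
  have SI: "S \<in> {S \<in> sets lborel. S \<subseteq> {0..T} \<times> {0..K}}"
    using S by simp
  have empty_iff: "{\<omega> \<in> space M. N \<omega> \<inter> S = {}} = {\<omega> \<in> space M. card (N \<omega> \<inter> S) = 0}"
    using N_ppp by (auto simp: poisson_point_process_def)
  have "(\<lambda>z. z S) -` {0} \<inter> space ?C \<in> sets ?C"
    by (rule measurable_sets[OF measurable_component_singleton[OF SI]]) simp
  moreover have "?Z -` ((\<lambda>z. z S) -` {0} \<inter> space ?C) \<inter> space M = {\<omega> \<in> space M. N \<omega> \<inter> S = {}}"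
    unfolding empty_iff using SI by (auto simp: space_PiM)
  ultimately show "{\<omega> \<in> space M. N \<omega> \<inter> S = {}} \<in> rv_events M ?C ?Z"
    unfolding rv_events_def by blast
  have "(\<lambda>\<omega>. card (N \<omega> \<inter> S)) \<in> M \<rightarrow>\<^sub>M count_space UNIV"
    using N_ppp S unfolding poisson_point_process_def by blast
  from measurable_sets[OF this, of "{0}"]
  show "{\<omega> \<in> space M. N \<omega> \<inter> S = {}} \<in> events"
    unfolding empty_iff by (simp add: vimage_def Int_def conj_commute)
  show "prob {\<omega> \<in> space M. N \<omega> \<inter> S = {}} = exp (- measure lborel S)"
    using N_ppp S unfolding empty_iff poisson_point_process_def by simp
qed

sublocale poisson_thinning T K "\<lambda>t \<omega>. \<phi> (B t \<omega>)" M path_sigma N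
proof unfold_locales
  show "continuous_on {0..T} (\<lambda>t. \<phi> (B t \<omega>))" if "\<omega> \<in> space M" for \<omega>
    using continuous_on_compose2[OF continuous_\<phi> continuous_on_bridge[OF that]] by simp
  show "(\<lambda>\<omega>. \<phi> (B t \<omega>)) \<in> borel_measurable path_sigma" if "t \<in> {0..T}" for t
    using bridge_measurable_path_sigma[OF that] borel_measurable_continuous_onI[OF continuous_\<phi>]
    by (rule measurable_compose)
  show "finite (N \<omega>)" if "\<omega> \<in> space M" for \<omega>
    using N_ppp that by (simp add: poisson_point_process_def)
  fix S assume S: "S \<in> sets lborel" "S \<subseteq> {0..T} \<times> {0..K}"
  show "{\<omega> \<in> space M. N \<omega> \<inter> S = {}} \<in> events"
    using N_avoidance(2)[OF S] .
  show "prob (A \<inter> {\<omega> \<in> space M. N \<omega> \<inter> S = {}}) = prob A * exp (- measure lborel S)"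
    if "A \<in> sets path_sigma" for A
    using indep_setD[OF N_indep, of A] that N_avoidance(1,3)[OF S] by (simp add: sets_path_sigma)
qed (use T_pos K_pos \<phi>_nonneg subalgebra_path_sigma in auto)

definition truncated_weight :: "'a \<Rightarrow> real" where
  "truncated_weight \<omega> = exp (- (LINT \<theta>:{0..T}|lborel. min K (\<phi> (B \<theta> \<omega>))))"

definition weight :: "'a \<Rightarrow> real" where
  "weight \<omega> = exp (- (LINT \<theta>:{0..T}|lborel. \<phi> (B \<theta> \<omega>)))"

definition exceedance :: "'a set" where
  "exceedance = {\<omega> \<in> space M. K < (SUP \<theta>\<in>{0..T}. \<phi> (B \<theta> \<omega>))}"

lemma truncated_weight_eq: "truncated_weight = (\<lambda>\<omega>. exp (- area \<omega>))"
  by (simp add: fun_eq_iff truncated_weight_def area_def capped_def)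

lemma accept_event_eq_accepted: "accept_event M \<phi> B T N = accepted"
proof -
  have "N \<omega> \<inter> {(t, y). 0 \<le> t \<and> t \<le> T \<and> 0 \<le> y \<and> y \<le> \<phi> (B t \<omega>)} = N \<omega> \<inter> hypograph \<omega>"
    if "\<omega> \<in> space M" for \<omega>
  proof -
    have "N \<omega> \<subseteq> {0..T} \<times> {0..K}"
      using N_ppp that unfolding poisson_point_process_def by blast
    then have "\<And>t y. (t, y) \<in> N \<omega> \<Longrightarrow> y \<le> K"
      by auto
    then show ?thesis
      by (auto simp: hypograph_def capped_def)
  qed
  then show ?thesis
    unfolding accept_event_def accepted_def by (intro Collect_cong conj_cong refl) simp
qed

lemma prob_accept_event: "prob (accept_event M \<phi> B T N) = expectation truncated_weight"
proof -
  have "prob accepted = (\<integral>\<omega>. 1 * indicator accepted \<omega> \<partial>M)"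
    using accepted_event by simp
  also have "\<dots> = (\<integral>\<omega>. 1 * exp (- area \<omega>) \<partial>M)"
    by (rule integral_accepted) auto
  finally show ?thesis
    by (simp add: accept_event_eq_accepted truncated_weight_eq)
qed

lemma truncated_expectation_eq:
  assumes "\<Psi> \<in> borel_measurable borel" "integrable M (\<lambda>\<omega>. \<Psi> (\<Theta> \<omega>))"
  shows "truncated_expectation M \<phi> B T N \<Psi>
    = expectation (\<lambda>\<omega>. \<Psi> (\<Theta> \<omega>) * truncated_weight \<omega>) / expectation truncated_weight"
proof -
  have "(\<lambda>\<omega>. \<Psi> (B T \<omega>)) \<in> borel_measurable path_sigma"
    using T_pos by (intro measurable_compose[OF bridge_measurable_path_sigma assms(1)]) auto
  then have "(\<lambda>\<omega>. \<Psi> (\<Theta> \<omega>)) \<in> borel_measurable path_sigma"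
    by (simp only: bridge_end)
  from integral_accepted[OF this assms(2)]
  have "(\<integral>\<omega>. \<Psi> (B T \<omega>) * indicator (accept_event M \<phi> B T N) \<omega> \<partial>M)
      = expectation (\<lambda>\<omega>. \<Psi> (\<Theta> \<omega>) * truncated_weight \<omega>)"
    by (simp add: accept_event_eq_accepted bridge_end truncated_weight_eq)
  then show ?thesis
    unfolding truncated_expectation_def by (simp only: prob_accept_event)
qed

lemma bdd_above_path: "\<omega> \<in> space M \<Longrightarrow> bdd_above ((\<lambda>\<theta>. \<phi> (B \<theta> \<omega>)) ` {0..T})"
  by (intro bounded_imp_bdd_above compact_imp_bounded compact_continuous_image continuous_paths)
    auto

lemma set_integrable_path: "\<omega> \<in> space M \<Longrightarrow> set_integrable lborel {0..T} (\<lambda>\<theta>. \<phi> (B \<theta> \<omega>))"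
  by (rule borel_integrable_atLeastAtMost'[OF continuous_paths])

lemma weights_bounds:
  assumes \<omega>: "\<omega> \<in> space M"
  shows "0 < weight \<omega> \<and> weight \<omega> \<le> truncated_weight \<omega> \<and> truncated_weight \<omega> \<le> 1"
proof -
  have "area \<omega> \<le> (LINT \<theta>:{0..T}|lborel. \<phi> (B \<theta> \<omega>))"
    unfolding area_def
    using set_integrable_capped[OF \<omega>] set_integrable_path[OF \<omega>]
    by (intro set_integral_mono) (auto simp: capped_def[abs_def])
  then show ?thesis
    using area_nonneg[of \<omega>] by (simp add: weight_def truncated_weight_eq)
qed

lemma truncated_weight_measurable: "truncated_weight \<in> borel_measurable M"
  using measurable_from_\<F>[OF area_measurable[OF space_\<F> measurable_F]]
  unfolding truncated_weight_eq by measurable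

text \<open>The untruncated path integral is the pointwise limit of the areas capped at level
  \<open>n + 1\<close>, which are eventually constant since each path is bounded.\<close>
lemma weight_measurable: "weight \<in> borel_measurable M"
proof -
  have capped: "capped_paths T (real n + 1) (\<lambda>t \<omega>. \<phi> (B t \<omega>)) (space M)" for n
    using T_pos continuous_paths \<phi>_nonneg by unfold_locales auto
  have "(\<lambda>\<omega>. LINT \<theta>:{0..T}|lborel. \<phi> (B \<theta> \<omega>)) \<in> borel_measurable M"
  proof (rule borel_measurable_LIMSEQ_real)
    show "capped_paths.area T (real n + 1) (\<lambda>t \<omega>. \<phi> (B t \<omega>)) \<in> borel_measurable M" for n
      by (rule measurable_from_\<F>[OF capped_paths.area_measurable[OF capped space_\<F> measurable_F]])
    fix \<omega> assume \<omega>: "\<omega> \<in> space M"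
    obtain C where C: "\<And>\<theta>. \<theta> \<in> {0..T} \<Longrightarrow> \<phi> (B \<theta> \<omega>) \<le> C"
      using bdd_above_path[OF \<omega>] unfolding bdd_above_def by blast
    have "capped_paths.area T (real n + 1) (\<lambda>t \<omega>. \<phi> (B t \<omega>)) \<omega> = (LINT \<theta>:{0..T}|lborel. \<phi> (B \<theta> \<omega>))"
      if "nat \<lceil>C\<rceil> \<le> n" for n
    proof -
      have "C \<le> real n + 1"
        using that by linarith
      then have "min (real n + 1) (\<phi> (B \<theta> \<omega>)) = \<phi> (B \<theta> \<omega>)" if "\<theta> \<in> {0..T}" for \<theta>
        using C[OF that] by simp
      then show ?thesis
        unfolding capped_paths.area_def[OF capped] capped_paths.capped_def[OF capped]
        by (intro set_lebesgue_integral_cong) auto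
    qed
    then show "(\<lambda>n. capped_paths.area T (real n + 1) (\<lambda>t \<omega>. \<phi> (B t \<omega>)) \<omega>)
        \<longlonglongrightarrow> (LINT \<theta>:{0..T}|lborel. \<phi> (B \<theta> \<omega>))"
      by (intro tendsto_eventually eventually_sequentiallyI[of "nat \<lceil>C\<rceil>"])
  qed
  then show ?thesis
    unfolding weight_def[abs_def] by measurable
qed

lemma integrable_abs_mult_weight:
  assumes "integrable M f"
  shows "integrable M (\<lambda>\<omega>. \<bar>f \<omega>\<bar> * weight \<omega>)"
proof (rule Bochner_Integration.integrable_bound[OF integrable_abs[OF assms]])
  show "(\<lambda>\<omega>. \<bar>f \<omega>\<bar> * weight \<omega>) \<in> borel_measurable M"
    using assms weight_measurable by measurable
  show "AE \<omega> in M. norm (\<bar>f \<omega>\<bar> * weight \<omega>) \<le> norm \<bar>f \<omega>\<bar>"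
    by (auto intro!: AE_I2 mult_left_le simp: abs_mult dest!: weights_bounds)
qed

lemma exceedance_eq_UN_Rats:
  "exceedance = (\<Union>q\<in>\<rat> \<inter> {0..T}. {\<omega> \<in> space M. K < \<phi> (B q \<omega>)})"
proof (intro equalityI subsetI)
  fix \<omega> assume "\<omega> \<in> exceedance"
  then have \<omega>: "\<omega> \<in> space M" and "K < (SUP \<theta>\<in>{0..T}. \<phi> (B \<theta> \<omega>))"
    by (auto simp: exceedance_def)
  then obtain \<theta> where \<theta>: "\<theta> \<in> {0..T}" "K < \<phi> (B \<theta> \<omega>)"
    using less_cSUP_iff[OF _ bdd_above_path[OF \<omega>]] T_pos by auto
  from continuous_paths[OF \<omega>, unfolded continuous_on_iff] \<theta> obtain d where "0 < d"
    and d: "\<And>s. s \<in> {0..T} \<Longrightarrow> dist s \<theta> < d \<Longrightarrow> dist (\<phi> (B s \<omega>)) (\<phi> (B \<theta> \<omega>)) < \<phi> (B \<theta> \<omega>) - K"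
    by (metis diff_gt_0_iff_gt)
  obtain q where q: "q \<in> \<rat>" "q \<in> {0..T}" "\<bar>q - \<theta>\<bar> < d"
    using Rats_near_in_interval[OF T_pos \<theta>(1) \<open>0 < d\<close>] .
  then have "K < \<phi> (B q \<omega>)"
    using d[of q] by (simp add: dist_real_def abs_less_iff)
  then show "\<omega> \<in> (\<Union>q\<in>\<rat> \<inter> {0..T}. {\<omega> \<in> space M. K < \<phi> (B q \<omega>)})"
    using q \<omega> by auto
next
  fix \<omega> assume "\<omega> \<in> (\<Union>q\<in>\<rat> \<inter> {0..T}. {\<omega> \<in> space M. K < \<phi> (B q \<omega>)})"
  then obtain q where q: "q \<in> {0..T}" "K < \<phi> (B q \<omega>)" and \<omega>: "\<omega> \<in> space M"
    by auto
  then show "\<omega> \<in> exceedance"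
    using cSUP_upper[OF q(1) bdd_above_path[OF \<omega>]] by (simp add: exceedance_def)
qed

lemma exceedance_event: "exceedance \<in> events"
  unfolding exceedance_eq_UN_Rats
proof (rule sets.countable_UN'')
  show "countable (\<rat> \<inter> {0..T})"
    by (intro countable_Int1 countable_rat)
  fix q assume "q \<in> \<rat> \<inter> {0..T}"
  then have "(\<lambda>\<omega>. \<phi> (B q \<omega>)) \<in> borel_measurable M"
    using measurable_from_\<F>[OF measurable_F] by auto
  then show "{\<omega> \<in> space M. K < \<phi> (B q \<omega>)} \<in> events"
    by measurable
qed

lemma weights_differ_on_exceedance:
  assumes \<omega>: "\<omega> \<in> space M"
  shows "truncated_weight \<omega> - weight \<omega> \<le> indicator exceedance \<omega>"
proof (cases "\<omega> \<in> exceedance")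
  case False
  have "\<phi> (B \<theta> \<omega>) \<le> K" if "\<theta> \<in> {0..T}" for \<theta>
    using cSUP_upper[OF that bdd_above_path[OF \<omega>]] False \<omega> by (simp add: exceedance_def)
  then have "truncated_weight \<omega> = weight \<omega>"
    unfolding truncated_weight_def weight_def by (intro arg_cong[where f="\<lambda>a. exp (- a)"] set_lebesgue_integral_cong) auto
  then show ?thesis by simp
qed (use weights_bounds[OF \<omega>] in simp)

end

lemma continuous_on_phi_fun:
  assumes "\<And>y. (\<alpha> has_real_derivative \<alpha>' y) (at y)" "continuous_on UNIV \<alpha>'"
  shows "continuous_on UNIV (phi_fun \<alpha> \<alpha>')"
proof -
  have "continuous_on UNIV \<alpha>"
    using assms(1) by (intro continuous_at_imp_continuous_on ballI DERIV_isCont) auto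
  then show ?thesis
    unfolding phi_fun_def[abs_def] using assms(2) by (intro continuous_intros) auto
qed

theorem proposition2:
  fixes \<alpha> \<alpha>' \<Psi> :: "real \<Rightarrow> real"
    and T x K :: real
    and M :: "'a measure" and W :: "real \<Rightarrow> 'a \<Rightarrow> real" and \<Theta> :: "'a \<Rightarrow> real"
    and N :: "'a \<Rightarrow> (real \<times> real) set"
    and P :: "'b measure" and W' :: "real \<Rightarrow> 'b \<Rightarrow> real" and X :: "real \<Rightarrow> 'b \<Rightarrow> real"
  defines "pK \<equiv> integral\<^sup>L M (\<lambda>\<omega>. exp (- (LINT \<theta>:{0..T}|lborel. min K (phi_fun \<alpha> \<alpha>' (bridge x T W \<Theta> \<theta> \<omega>)))))"
    and "pinf \<equiv> integral\<^sup>L M (\<lambda>\<omega>. exp (- (LINT \<theta>:{0..T}|lborel. phi_fun \<alpha> \<alpha>' (bridge x T W \<Theta> \<theta> \<omega>))))"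
    and "qK \<equiv> measure M {\<omega>\<in>space M. (SUP \<theta>\<in>{0..T}. phi_fun \<alpha> \<alpha>' (bridge x T W \<Theta> \<theta> \<omega>)) > K}"
  assumes T_pos: "T > 0" and K_pos: "K > 0"
    and alpha_deriv: "\<And>y. (\<alpha> has_real_derivative \<alpha>' y) (at y)"
    and alpha'_cont: "continuous_on UNIV \<alpha>'"
    and phi_nonneg: "\<And>y. phi_fun \<alpha> \<alpha>' y \<ge> 0"
    and dens_int: "integrable lborel (end_dens \<alpha> x T)"
    \<comment> \<open>the Brownian bridge \<open>B\<close>: built from a Brownian motion \<open>W\<close> and an independent end point \<open>\<Theta>\<close>\<close>
    and W_bm: "brownian_motion M T W"
    and Theta_distr: "distributed M lborel \<Theta>
          (\<lambda>\<theta>. ennreal (end_dens \<alpha> x T \<theta> / (\<integral>z. end_dens \<alpha> x T z \<partial>lborel)))"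
    and W_Theta_indep: "prob_space.indep_set M
          (rv_events M (Pi\<^sub>M {0..T} (\<lambda>_. borel)) (\<lambda>\<omega>. restrict (\<lambda>t. W t \<omega>) {0..T}))
          (rv_events M borel \<Theta>)"
    \<comment> \<open>the Poisson point process \<open>N\<close> on \<open>[0,T]\<times>[0,K]\<close>, independent of the bridge\<close>
    and N_ppp: "poisson_point_process M ({0..T} \<times> {0..K}) N"
    and N_indep: "prob_space.indep_set M
          (rv_events M (Pi\<^sub>M {0..T} (\<lambda>_. borel) \<Otimes>\<^sub>M borel) (\<lambda>\<omega>. (restrict (\<lambda>t. W t \<omega>) {0..T}, \<Theta> \<omega>)))
          (rv_events M (Pi\<^sub>M {S \<in> sets lborel. S \<subseteq> {0..T} \<times> {0..K}} (\<lambda>_. count_space UNIV))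
             (\<lambda>\<omega>. restrict (\<lambda>S. card (N \<omega> \<inter> S)) {S \<in> sets lborel. S \<subseteq> {0..T} \<times> {0..K}}))"
    \<comment> \<open>the diffusion \<open>X\<close>: \<open>X_t = x + \<integral>_0^t \<alpha>(X_s) ds + W'_t\<close>\<close>
    and W'_bm: "brownian_motion P T W'"
    and X_meas: "\<And>t. t \<in> {0..T} \<Longrightarrow> X t \<in> borel_measurable P"
    and X_cont: "\<And>\<omega>. \<omega> \<in> space P \<Longrightarrow> continuous_on {0..T} (\<lambda>t. X t \<omega>)"
    and X_sde: "\<And>\<omega> t. \<omega> \<in> space P \<Longrightarrow> t \<in> {0..T} \<Longrightarrow>
          X t \<omega> = x + (LINT s:{0..t}|lborel. \<alpha> (X s \<omega>)) + W' t \<omega>"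
    \<comment> \<open>standing assumption: exact-simulation representation\<close>
    and representation: "\<And>\<Psi>'. \<Psi>' \<in> borel_measurable borel \<Longrightarrow>
          integrable M (\<lambda>\<omega>. \<bar>\<Psi>' (bridge x T W \<Theta> T \<omega>)\<bar> * exp (- (LINT \<theta>:{0..T}|lborel. phi_fun \<alpha> \<alpha>' (bridge x T W \<Theta> \<theta> \<omega>)))) \<Longrightarrow>
          integrable P (\<lambda>\<omega>. \<Psi>' (X T \<omega>)) \<and>
          integral\<^sup>L P (\<lambda>\<omega>. \<Psi>' (X T \<omega>))
            = integral\<^sup>L M (\<lambda>\<omega>. \<Psi>' (bridge x T W \<Theta> T \<omega>) * exp (- (LINT \<theta>:{0..T}|lborel. phi_fun \<alpha> \<alpha>' (bridge x T W \<Theta> \<theta> \<omega>)))) / pinf"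
    and Psi_meas: "\<Psi> \<in> borel_measurable borel"
    and Psi_sq: "integrable M (\<lambda>\<omega>. (\<Psi> (bridge x T W \<Theta> T \<omega>))\<^sup>2)"
  shows "\<bar>integral\<^sup>L P (\<lambda>\<omega>. \<Psi> (X T \<omega>)) - truncated_expectation M (phi_fun \<alpha> \<alpha>') (bridge x T W \<Theta>) T N \<Psi>\<bar>
           \<le> sqrt (integral\<^sup>L M (\<lambda>\<omega>. (\<Psi> (bridge x T W \<Theta> T \<omega>))\<^sup>2)) * (qK / (pK * sqrt pinf) + sqrt qK / pK)
         \<and> (bdd_above (range (\<lambda>y. \<bar>\<Psi> y\<bar>)) \<longrightarrow>
           \<bar>integral\<^sup>L P (\<lambda>\<omega>. \<Psi> (X T \<omega>)) - truncated_expectation M (phi_fun \<alpha> \<alpha>') (bridge x T W \<Theta>) T N \<Psi>\<bar>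
             \<le> 2 * (SUP y. \<bar>\<Psi> y\<bar>) / pK * qK)"
proof -
  have "prob_space M"
    using W_bm unfolding brownian_motion_def by blast
  then interpret bridge_rejection M T K x "phi_fun \<alpha> \<alpha>'" W \<Theta> N
    using T_pos K_pos continuous_on_phi_fun[OF alpha_deriv alpha'_cont] phi_nonneg W_bm
      distributed_measurable[OF Theta_distr] N_ppp N_indep
    by (intro bridge_rejection.intro bridge_rejection_axioms.intro) simp_all
  define \<psi> where "\<psi> = (\<lambda>\<omega>. \<Psi> (\<Theta> \<omega>))"
  have \<psi>: "\<psi> \<in> borel_measurable M" "integrable M (\<lambda>\<omega>. (\<psi> \<omega>)\<^sup>2)"
    using Psi_meas \<Theta>_measurable Psi_sq by (simp_all add: \<psi>_def bridge_end)
  have "integrable M \<psi>"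
    by (rule square_integrable_imp_integrable[OF \<psi>])
  have weights: "pinf = expectation weight" "pK = expectation truncated_weight" "qK = prob exceedance"
    unfolding pinf_def pK_def qK_def weight_def[abs_def] truncated_weight_def[abs_def] exceedance_def
    by simp_all
  have "integral\<^sup>L P (\<lambda>\<omega>. \<Psi> (X T \<omega>)) = expectation (\<lambda>\<omega>. \<psi> \<omega> * weight \<omega>) / expectation weight"
    using representation[OF Psi_meas] integrable_abs_mult_weight[OF \<open>integrable M \<psi>\<close>]
    by (simp add: weight_def bridge_end \<psi>_def weights(1))
  moreover have "truncated_expectation M (phi_fun \<alpha> \<alpha>') B T N \<Psi>
      = expectation (\<lambda>\<omega>. \<psi> \<omega> * truncated_weight \<omega>) / expectation truncated_weight"
    using truncated_expectation_eq[OF Psi_meas] \<open>integrable M \<psi>\<close> by (simp add: \<psi>_def)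
  moreover have "\<bar>\<psi> \<omega>\<bar> \<le> (SUP y. \<bar>\<Psi> y\<bar>)" if "bdd_above (range (\<lambda>y. \<bar>\<Psi> y\<bar>))" for \<omega>
    unfolding \<psi>_def using that by (rule cSUP_upper[OF UNIV_I])
  ultimately show ?thesis
    using weighted_mean_perturbation[OF \<psi> weight_measurable truncated_weight_measurable weights_bounds
        exceedance_event weights_differ_on_exceedance]
      weighted_mean_perturbation_bounded[OF \<psi> weight_measurable truncated_weight_measurable weights_bounds
        exceedance_event weights_differ_on_exceedance]
    by (simp add: weights \<psi>_def bridge_end)
qed

end
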